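(* Let $(M,F)$ be a Finsler surface written on the region $y^1\neq0$ as $F=|y^1|f(x,u)$, $u=y^2/y^1$, where $f$ is of one of the forms $$f(x,u)=\sqrt{c_3u^2+(c_2c_3-4c_1+1)u+c_2}\;\exp\!\left(\frac{(-c_2c_3+4c_1+1)\operatorname{arctanh}\!\left(\frac{2c_3u+c_2c_3-4c_1+1}{\sqrt{D}}\right)}{\sqrt{D}}\right),\quad D=c_2^2c_3^2-8c_1c_2c_3+16c_1^2-2c_2c_3-8c_1+1,$$ or $$f(x,u)=\sqrt{au^2+bu+1}\;\exp\!\left(-\frac{b}{\sqrt{b^2-4a}}\operatorname{arctanh}\!\left(\frac{2au+b}{\sqrt{b^2-4a}}\right)\right),$$ with $c_1,c_2,c_3,a,b$ functions of $x^1,x^2$. If $(M,F)$ is Landsbergian, then it is Berwaldian.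
   Context: For a Finsler function $F$ with geodesic spray coefficients $G^i=\frac14 g^{il}\big(y^k\frac{\partial^2F^2}{\partial x^k\partial y^l}-\frac{\partial F^2}{\partial x^l}\big)$, $g_{ij}=\dot\partial_i\dot\partial_j(\frac12F^2)$, $\dot\partial_i=\partial/\partial y^i$, the Berwald tensor is $G^h_{ijk}=\dot\partial_i\dot\partial_j\dot\partial_kG^h$ and the Landsberg tensor is $L_{ijk}=-\frac12F\,G^h_{ijk}\dot\partial_hF$. $(M,F)$ is Berwaldian if $G^h_{ijk}\equiv0$ and Landsbergian if $L_{ijk}\equiv0$. *)

theory Defs
  imports "HOL-Analysis.Analysis"
begin

text \<open>Local coordinates on a surface: position x and direction y, both in real^2.
  The two coordinate indices are the elements 1 and 2 of the type 2.
  A function on (part of) the tangent bundle is a map real^2 => real^2 => real.\<close>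

type_synonym tbfun = "real^2 \<Rightarrow> real^2 \<Rightarrow> real"

definition dX :: "2 \<Rightarrow> tbfun \<Rightarrow> tbfun" where
  "dX k H = (\<lambda>x y. deriv (\<lambda>t. H (x + t *\<^sub>R axis k 1) y) 0)"

definition dY :: "2 \<Rightarrow> tbfun \<Rightarrow> tbfun" where
  "dY k H = (\<lambda>x y. deriv (\<lambda>t. H x (y + t *\<^sub>R axis k 1)) 0)"

definition fund :: "tbfun \<Rightarrow> 2 \<Rightarrow> 2 \<Rightarrow> tbfun" where
  "fund F i j = dY i (dY j (\<lambda>x y. (F x y)\<^sup>2 / 2))"

definition fund_inv :: "tbfun \<Rightarrow> 2 \<Rightarrow> 2 \<Rightarrow> tbfun" where
  "fund_inv F i j = (\<lambda>x y. matrix_inv (\<chi> a b. fund F a b x y) $ i $ j)"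

definition spray :: "tbfun \<Rightarrow> 2 \<Rightarrow> tbfun" where
  "spray F h = (\<lambda>x y. (1/4) * (\<Sum>l\<in>UNIV. fund_inv F h l x y *
      ((\<Sum>k\<in>UNIV. y $ k * dX k (dY l (\<lambda>x' y'. (F x' y')\<^sup>2)) x y)
        - dX l (\<lambda>x' y'. (F x' y')\<^sup>2) x y)))"

definition berwald :: "tbfun \<Rightarrow> 2 \<Rightarrow> 2 \<Rightarrow> 2 \<Rightarrow> 2 \<Rightarrow> tbfun" where
  "berwald F h i j k = dY i (dY j (dY k (spray F h)))"

definition landsberg :: "tbfun \<Rightarrow> 2 \<Rightarrow> 2 \<Rightarrow> 2 \<Rightarrow> tbfun" where
  "landsberg F i j k = (\<lambda>x y. - (1/2) * F x y *
      (\<Sum>h\<in>UNIV. berwald F h i j k x y * dY h F x y))"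

definition pd :: "2 \<Rightarrow> (real^2 \<Rightarrow> real) \<Rightarrow> real^2 \<Rightarrow> real" where
  "pd k g = (\<lambda>x. deriv (\<lambda>t. g (x + t *\<^sub>R axis k 1)) 0)"

fun iter_pd :: "2 list \<Rightarrow> (real^2 \<Rightarrow> real) \<Rightarrow> real^2 \<Rightarrow> real" where
  "iter_pd [] g = g"
| "iter_pd (k # ks) g = pd k (iter_pd ks g)"

definition smooth2_on :: "(real^2) set \<Rightarrow> (real^2 \<Rightarrow> real) \<Rightarrow> bool" where
  "smooth2_on U g \<longleftrightarrow> (\<forall>ks. iter_pd ks g differentiable_on U)"

text \<open>First form of f(x,u) (with c1 c2 c3 the values at x)\<close>
definition D1 :: "real \<Rightarrow> real \<Rightarrow> real \<Rightarrow> real" where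
  "D1 c1 c2 c3 = c2\<^sup>2 * c3\<^sup>2 - 8 * c1 * c2 * c3 + 16 * c1\<^sup>2 - 2 * c2 * c3 - 8 * c1 + 1"

definition form1 :: "real \<Rightarrow> real \<Rightarrow> real \<Rightarrow> real \<Rightarrow> real" where
  "form1 c1 c2 c3 u =
     sqrt (c3 * u\<^sup>2 + (c2 * c3 - 4 * c1 + 1) * u + c2) *
     exp ((- c2 * c3 + 4 * c1 + 1) *
          artanh ((2 * c3 * u + c2 * c3 - 4 * c1 + 1) / sqrt (D1 c1 c2 c3))
          / sqrt (D1 c1 c2 c3))"

definition form1_ok :: "real \<Rightarrow> real \<Rightarrow> real \<Rightarrow> real \<Rightarrow> bool" where
  "form1_ok c1 c2 c3 u \<longleftrightarrow>
     c3 * u\<^sup>2 + (c2 * c3 - 4 * c1 + 1) * u + c2 > 0 \<and> D1 c1 c2 c3 > 0 \<and>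
     \<bar>(2 * c3 * u + c2 * c3 - 4 * c1 + 1) / sqrt (D1 c1 c2 c3)\<bar> < 1"

definition form2 :: "real \<Rightarrow> real \<Rightarrow> real \<Rightarrow> real" where
  "form2 a b u =
     sqrt (a * u\<^sup>2 + b * u + 1) *
     exp (- (b / sqrt (b\<^sup>2 - 4 * a)) * artanh ((2 * a * u + b) / sqrt (b\<^sup>2 - 4 * a)))"

definition form2_ok :: "real \<Rightarrow> real \<Rightarrow> real \<Rightarrow> bool" where
  "form2_ok a b u \<longleftrightarrow>
     a * u\<^sup>2 + b * u + 1 > 0 \<and> b\<^sup>2 - 4 * a > 0 \<and>
     \<bar>(2 * a * u + b) / sqrt (b\<^sup>2 - 4 * a)\<bar> < 1"

end

theory Submission
  imports Defs
begin

text \<open>For both forms of f the square F^2 is a product e^g (\<mu>\<bullet>y)^(2a) (\<nu>\<bullet>y)^(2(1-a)) of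
  powers of two linear forms \<mu>(x), \<nu>(x) in y: the quadratic under the square root factors into
  two linear forms, and the artanh is half the logarithm of their ratio. Positive definiteness forces \<mu>, \<nu> to be
  independent and a \<noteq> 0, 1. In the basis e1, e2 dual to \<mu>, \<nu> the spray is a quadratic
  polynomial in y plus the two terms
  (D[e1] a) (\<mu>\<bullet>y)^2 ln(\<mu>\<bullet>y / \<nu>\<bullet>y) e1 / 2a  and  (D[e2] a) (\<nu>\<bullet>y)^2 ln(\<mu>\<bullet>y / \<nu>\<bullet>y) e2 / 2(1-a),
  where D[v] a is the derivative of a in the direction v of position space. Differentiating three
  times along a coordinate axis gives
  L_iii = -F^2 (\<mu>_i/\<mu>\<bullet>y - \<nu>_i/\<nu>\<bullet>y)^3 (D[y] a) / 2,
  and the cubed factor cannot vanish for both i since \<mu>, \<nu> are independent. So a Landsberg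
  metric has D[y] a = 0 on an open set of directions y, hence da = 0; the spray is then quadratic
  in y and the Berwald tensor vanishes.\<close>

lemma inner_vec2: "(u::real^2) \<bullet> v = u$1 * v$1 + u$2 * v$2"
  by (simp add: inner_vec_def sum_2)

lemma inner_add_axis: "(u::real^2) \<bullet> (y + t *\<^sub>R axis k 1) = u \<bullet> y + t * u$k"
  by (simp add: inner_add_right inner_axis)

lemma matrix_inv_left_pos_def:
  fixes M :: "real^'n^'n"
  assumes "\<And>v. v \<noteq> 0 \<Longrightarrow> v \<bullet> (M *v v) > 0"
  shows "matrix_inv M ** M = mat 1"
proof -
  have "\<forall>x. M *v x = 0 \<longrightarrow> x = 0"
    using assms by force
  then have "invertible M"
    using invertible_left_inverse matrix_left_invertible_ker by blast
  then have "M ** matrix_inv M = mat 1 \<and> matrix_inv M ** M = mat 1"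
    unfolding invertible_def matrix_inv_def by (rule someI_ex)
  then show ?thesis by simp
qed

definition perp :: "real^2 \<Rightarrow> real^2" where
  "perp v = (\<chi> m. if m = 1 then v$2 else - v$1)"

lemma perp_eq_0_iff: "perp v = 0 \<longleftrightarrow> v = 0"
  by (auto simp: perp_def vec_eq_iff forall_2)

lemma inner_perp: "u \<bullet> perp v = u$1 * v$2 - u$2 * v$1"
  by (simp add: perp_def inner_vec2)

section \<open>Partial derivatives in position and direction\<close>

lemma eventually_lines_in_open:
  fixes N :: "((real^2) \<times> (real^2)) set"
  assumes "open N" "(x,y) \<in> N"
  shows "eventually (\<lambda>t::real. (x, y + t *\<^sub>R e) \<in> N) (nhds 0)"
    and "eventually (\<lambda>t::real. (x + t *\<^sub>R e, y) \<in> N) (nhds 0)"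
proof -
  have "open ((\<lambda>t::real. (x, y + t *\<^sub>R e)) -` N)" "open ((\<lambda>t::real. (x + t *\<^sub>R e, y)) -` N)"
    by (intro continuous_open_vimage assms(1) continuous_intros allI)+
  then show "eventually (\<lambda>t::real. (x, y + t *\<^sub>R e) \<in> N) (nhds 0)"
    and "eventually (\<lambda>t::real. (x + t *\<^sub>R e, y) \<in> N) (nhds 0)"
    using eventually_nhds_in_open assms(2) by fastforce+
qed

lemma dY_cong_open:
  assumes "open N" "(x,y) \<in> N" "\<And>y'. (x,y') \<in> N \<Longrightarrow> H x y' = K x y'"
  shows "dY k H x y = dY k K x y"
  unfolding dY_def
  by (rule deriv_cong_ev[OF eventually_mono[OF eventually_lines_in_open(1)[OF assms(1,2), of "axis k 1"]]])
     (auto simp: assms(3))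

lemma dX_cong_open:
  assumes "open N" "(x,y) \<in> N" "\<And>x' y'. (x',y') \<in> N \<Longrightarrow> H x' y' = K x' y'"
  shows "dX k H x y = dX k K x y"
  unfolding dX_def
  by (rule deriv_cong_ev[OF eventually_mono[OF eventually_lines_in_open(2)[OF assms(1,2), of "axis k 1"]]])
     (auto simp: assms(3))

lemma dY_eqI: "((\<lambda>t. H x (y + t *\<^sub>R axis k 1)) has_real_derivative D) (at 0) \<Longrightarrow> dY k H x y = D"
  unfolding dY_def by (rule DERIV_imp_deriv)

lemma dX_eqI: "((\<lambda>t. H (x + t *\<^sub>R axis k 1) y) has_real_derivative D) (at 0) \<Longrightarrow> dX k H x y = D"
  unfolding dX_def by (rule DERIV_imp_deriv)

lemma dY_along_axis:
  assumes "\<And>s. G x (y + s *\<^sub>R axis i 1) = g s"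
  shows "dY i G x (y + s *\<^sub>R axis i 1) = deriv g s"
proof -
  have "G x (y + s *\<^sub>R axis i 1 + t *\<^sub>R axis i 1) = g (s + t)" for t
    using assms[of "s + t"] by (simp add: scaleR_add_left add.assoc)
  then show ?thesis
    unfolding dY_def deriv_shift_0[of g s] by (simp add: o_def)
qed

lemma dY3_diag: "dY i (dY i (dY i G)) x y = deriv (deriv (deriv (\<lambda>t. G x (y + t *\<^sub>R axis i 1)))) 0"
proof -
  define g where "g = (\<lambda>t. G x (y + t *\<^sub>R axis i 1))"
  have "dY i G x (y + s *\<^sub>R axis i 1) = deriv g s" for s
    by (rule dY_along_axis) (simp add: g_def)
  then have "dY i (dY i G) x (y + s *\<^sub>R axis i 1) = deriv (deriv g) s" for s
    by (rule dY_along_axis)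
  then have "dY i (dY i (dY i G)) x (y + 0 *\<^sub>R axis i 1) = deriv (deriv (deriv g)) 0"
    by (rule dY_along_axis)
  then show ?thesis by (simp add: g_def)
qed

lemma differentiable_along_line:
  fixes c :: "'a::real_normed_vector \<Rightarrow> real"
  assumes "c differentiable (at x0)"
  shows "(\<lambda>t. c (x0 + t *\<^sub>R e)) differentiable (at 0)"
proof (rule differentiable_compose[where f=c])
  show "c differentiable (at (x0 + 0 *\<^sub>R e))" using assms by simp
  show "(\<lambda>t::real. x0 + t *\<^sub>R e) differentiable (at 0)"
    by (intro differentiable_add differentiable_scaleR differentiable_const differentiable_ident)
qed

lemma differentiable_sqrt_comp:
  fixes f :: "'a::real_normed_vector \<Rightarrow> real"
  assumes "f differentiable (at x)" "f x > 0"
  shows "(\<lambda>x. sqrt (f x)) differentiable (at x)"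
  using assms unfolding differentiable_def by (blast intro: has_derivative_real_sqrt)

lemma differentiable_ln_comp:
  fixes f :: "'a::real_normed_vector \<Rightarrow> real"
  assumes "f differentiable (at x)" "f x > 0"
  shows "(\<lambda>x. ln (f x)) differentiable (at x)"
  using assms unfolding differentiable_def by (blast intro: has_derivative_ln)

section \<open>Third derivatives of real functions at 0\<close>

text \<open>The first two derivatives are required to exist near 0: otherwise
  deriv (deriv (deriv f)) 0 is an unspecified value.\<close>
definition has_deriv3_0 :: "(real \<Rightarrow> real) \<Rightarrow> real \<Rightarrow> bool" where
  "has_deriv3_0 f d \<longleftrightarrow> (\<exists>f1 f2. eventually (\<lambda>t. (f has_real_derivative f1 t) (at t)) (nhds 0) \<and>
      eventually (\<lambda>t. (f1 has_real_derivative f2 t) (at t)) (nhds 0) \<and> (f2 has_real_derivative d) (at 0))"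

lemma eventually_deriv_cong:
  assumes "eventually (\<lambda>t. f t = g t) (nhds (x::real))"
  shows "eventually (\<lambda>t. deriv f t = deriv g t) (nhds x)"
proof -
  have "eventually (\<lambda>t. eventually (\<lambda>s. f s = g s) (nhds t)) (nhds x)"
    using assms eventually_eventually by blast
  then show ?thesis
    by (rule eventually_mono) (rule deriv_cong_ev, auto)
qed

lemma has_deriv3_0_imp_deriv:
  assumes "has_deriv3_0 f d" shows "deriv (deriv (deriv f)) 0 = d"
proof -
  obtain f1 f2 where h1: "eventually (\<lambda>t. (f has_real_derivative f1 t) (at t)) (nhds 0)"
    and h2: "eventually (\<lambda>t. (f1 has_real_derivative f2 t) (at t)) (nhds 0)"
    and h3: "(f2 has_real_derivative d) (at 0)"
    using assms unfolding has_deriv3_0_def by blast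
  have e1: "eventually (\<lambda>t. deriv f t = f1 t) (nhds 0)"
    using h1 by (rule eventually_mono) (rule DERIV_imp_deriv)
  have e2: "eventually (\<lambda>t. deriv (deriv f) t = deriv f1 t) (nhds 0)"
    by (rule eventually_deriv_cong[OF e1])
  have e3: "eventually (\<lambda>t. deriv f1 t = f2 t) (nhds 0)"
    using h2 by (rule eventually_mono) (rule DERIV_imp_deriv)
  have e4: "eventually (\<lambda>t. deriv (deriv f) t = f2 t) (nhds 0)"
    using e2 e3 by eventually_elim simp
  have "deriv (deriv (deriv f)) 0 = deriv f2 0"
    by (rule deriv_cong_ev[OF e4 refl])
  also have "\<dots> = d" using h3 by (rule DERIV_imp_deriv)
  finally show ?thesis .
qed

lemma has_deriv3_0_lincomb:
  assumes "has_deriv3_0 f d" "has_deriv3_0 g e"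
  shows "has_deriv3_0 (\<lambda>t. c * f t + k * g t) (c * d + k * e)"
proof -
  obtain f1 f2 where h1: "eventually (\<lambda>t. (f has_real_derivative f1 t) (at t)) (nhds 0)"
    and h2: "eventually (\<lambda>t. (f1 has_real_derivative f2 t) (at t)) (nhds 0)"
    and h3: "(f2 has_real_derivative d) (at 0)"
    using assms(1) unfolding has_deriv3_0_def by blast
  obtain g1 g2 where k1: "eventually (\<lambda>t. (g has_real_derivative g1 t) (at t)) (nhds 0)"
    and k2: "eventually (\<lambda>t. (g1 has_real_derivative g2 t) (at t)) (nhds 0)"
    and k3: "(g2 has_real_derivative e) (at 0)"
    using assms(2) unfolding has_deriv3_0_def by blast
  have "eventually (\<lambda>t. ((\<lambda>t. c * f t + k * g t) has_real_derivative (\<lambda>t. c * f1 t + k * g1 t) t) (at t)) (nhds 0)"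
    using h1 k1 by eventually_elim (auto intro!: derivative_eq_intros)
  moreover have "eventually (\<lambda>t. ((\<lambda>t. c * f1 t + k * g1 t) has_real_derivative (\<lambda>t. c * f2 t + k * g2 t) t) (at t)) (nhds 0)"
    using h2 k2 by eventually_elim (auto intro!: derivative_eq_intros)
  moreover have "((\<lambda>t. c * f2 t + k * g2 t) has_real_derivative (c * d + k * e)) (at 0)"
    using h3 k3 by (auto intro!: derivative_eq_intros)
  ultimately show ?thesis unfolding has_deriv3_0_def
    by (intro exI[of _ "\<lambda>t. c * f1 t + k * g1 t"] exI[of _ "\<lambda>t. c * f2 t + k * g2 t"]) auto
qed

lemma has_deriv3_0_cong:
  assumes "eventually (\<lambda>t. f t = g t) (nhds 0)" "has_deriv3_0 f d"
  shows "has_deriv3_0 g d"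
proof -
  obtain f1 f2 where h1: "eventually (\<lambda>t. (f has_real_derivative f1 t) (at t)) (nhds 0)"
    and h2: "eventually (\<lambda>t. (f1 has_real_derivative f2 t) (at t)) (nhds 0)"
    and h3: "(f2 has_real_derivative d) (at 0)"
    using assms(2) unfolding has_deriv3_0_def by blast
  have ee: "eventually (\<lambda>t. eventually (\<lambda>s. f s = g s) (nhds t)) (nhds 0)"
    using assms(1) eventually_eventually by blast
  have "eventually (\<lambda>t. (g has_real_derivative f1 t) (at t)) (nhds 0)"
    using h1 ee by eventually_elim (use DERIV_cong_ev in blast)
  then show ?thesis unfolding has_deriv3_0_def using h2 h3 by blast
qed

lemma has_deriv3_0_quadratic_poly: "has_deriv3_0 (\<lambda>t. al + be * t + ga * t^2) 0"
proof -
  have "\<And>t. ((\<lambda>t. al + be * t + ga * t^2) has_real_derivative (be + 2 * ga * t)) (at t)"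
    by (auto intro!: derivative_eq_intros)
  moreover have "\<And>t. ((\<lambda>t. be + 2 * ga * t) has_real_derivative (2 * ga)) (at t)"
    by (auto intro!: derivative_eq_intros)
  moreover have "((\<lambda>t. 2 * ga) has_real_derivative 0) (at 0)"
    by (auto intro!: derivative_eq_intros)
  ultimately show ?thesis unfolding has_deriv3_0_def
    by (intro exI[of _ "\<lambda>t. be + 2 * ga * t"] exI[of _ "\<lambda>t. 2 * ga"]) auto
qed

lemma eventually_affine_pos:
  assumes "P > (0::real)"
  shows "eventually (\<lambda>t. P + t * p > 0) (nhds 0)"
proof -
  have "open {t::real. 0 < P + t * p}"
    by (rule open_Collect_less) (auto intro!: continuous_intros)
  then show ?thesis using eventually_nhds_in_open[of "{t::real. 0 < P + t * p}" 0] assms by simp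
qed

lemma has_deriv3_0_sq_log_ratio:
  assumes P: "P > 0" and Q: "Q > 0"
  shows "has_deriv3_0 (\<lambda>t. (P + t * p)^2 * (ln (P + t * p) - ln (Q + t * q))) (2 * P^2 * (p/P - q/Q)^3)"
proof -
  define a where "a = (\<lambda>t::real. P + t * p)"
  define b where "b = (\<lambda>t::real. Q + t * q)"
  have da: "(a has_real_derivative p) (at t)" and db: "(b has_real_derivative q) (at t)" for t
    unfolding a_def b_def by (auto intro!: derivative_eq_intros)
  have d1: "((\<lambda>s. (a s)^2 * (ln (a s) - ln (b s))) has_real_derivative
      2*p*(a t)*(ln(a t) - ln(b t)) + p*(a t) - q*(a t)^2/(b t)) (at t)"
    if "a t > 0 \<and> b t > 0" for t
    using that da db by (auto intro!: derivative_eq_intros simp: field_simps power2_eq_square)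
  have d2: "((\<lambda>s. 2*p*(a s)*(ln(a s) - ln(b s)) + p*(a s) - q*(a s)^2/(b s)) has_real_derivative
      2*p^2*(ln(a t) - ln(b t)) + 3*p^2 - 4*p*q*(a t)/(b t) + q^2*(a t)^2/(b t)^2) (at t)"
    if "a t > 0 \<and> b t > 0" for t
    using that da db by (auto intro!: derivative_eq_intros simp: field_simps power2_eq_square)
  have d3: "((\<lambda>s. 2*p^2*(ln(a s) - ln(b s)) + 3*p^2 - 4*p*q*(a s)/(b s) + q^2*(a s)^2/(b s)^2)
      has_real_derivative 2 * (a 0)^2 * (p/(a 0) - q/(b 0))^3) (at 0)"
    using P Q da db
    by (auto intro!: derivative_eq_intros simp: a_def b_def field_simps power2_eq_square power3_eq_cube)
  have ev: "eventually (\<lambda>t. a t > 0 \<and> b t > 0) (nhds 0)"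
    using eventually_affine_pos[OF P, of p] eventually_affine_pos[OF Q, of q]
    unfolding a_def b_def by eventually_elim simp
  have "has_deriv3_0 (\<lambda>s. (a s)^2 * (ln (a s) - ln (b s))) (2 * (a 0)^2 * (p/(a 0) - q/(b 0))^3)"
    unfolding has_deriv3_0_def
    by (intro exI conjI eventually_mono[OF ev]) (erule d1 d2 | rule d3)+
  then show ?thesis by (simp add: a_def b_def)
qed

section \<open>Quadratic polynomials on the plane\<close>

definition quad_poly :: "real \<Rightarrow> real \<Rightarrow> real \<Rightarrow> real \<Rightarrow> real \<Rightarrow> real \<Rightarrow> real^2 \<Rightarrow> real" where
  "quad_poly c0 c1 c2 c11 c12 c22 y =
     c0 + c1 * y$1 + c2 * y$2 + c11 * y$1 * y$1 + c12 * y$1 * y$2 + c22 * y$2 * y$2"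

definition quadratic_fun :: "(real^2 \<Rightarrow> real) \<Rightarrow> bool" where
  "quadratic_fun q \<longleftrightarrow> (\<exists>c0 c1 c2 c11 c12 c22. \<forall>y. q y = quad_poly c0 c1 c2 c11 c12 c22 y)"

definition linear_fun :: "(real^2 \<Rightarrow> real) \<Rightarrow> bool" where
  "linear_fun l \<longleftrightarrow> (\<exists>p q. \<forall>y. l y = p * y$1 + q * y$2)"

lemma linear_fun_inner: "linear_fun (\<lambda>y. u \<bullet> y)"
  unfolding linear_fun_def inner_vec2 by auto

lemma linear_fun_nth: "linear_fun (\<lambda>y. y $ i)"
  using linear_fun_inner[of "axis i 1"] by (simp add: inner_axis inner_commute)

lemma linear_fun_add: "linear_fun f \<Longrightarrow> linear_fun g \<Longrightarrow> linear_fun (\<lambda>y. f y + g y)"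
  unfolding linear_fun_def
  by (elim exE, rename_tac p q p' q', rule_tac x="p+p'" in exI, rule_tac x="q+q'" in exI)
     (simp add: algebra_simps)

lemma linear_fun_cmult: "linear_fun f \<Longrightarrow> linear_fun (\<lambda>y. c * f y)"
  unfolding linear_fun_def
  by (elim exE, rename_tac p q, rule_tac x="c*p" in exI, rule_tac x="c*q" in exI)
     (simp add: algebra_simps)

lemma linear_fun_rmult: "linear_fun f \<Longrightarrow> linear_fun (\<lambda>y. f y * c)"
  using linear_fun_cmult[of f c] by (simp add: mult.commute)

lemma quadratic_fun_prod: "linear_fun l \<Longrightarrow> linear_fun m \<Longrightarrow> quadratic_fun (\<lambda>y. l y * m y)"
  unfolding linear_fun_def quadratic_fun_def quad_poly_def
  by (elim exE, rename_tac p q p' q',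
      rule_tac x=0 in exI, rule_tac x=0 in exI, rule_tac x=0 in exI,
      rule_tac x="p*p'" in exI, rule_tac x="p*q'+q*p'" in exI, rule_tac x="q*q'" in exI)
     (simp add: algebra_simps)

lemma quadratic_fun_add: "quadratic_fun f \<Longrightarrow> quadratic_fun g \<Longrightarrow> quadratic_fun (\<lambda>y. f y + g y)"
  unfolding quadratic_fun_def quad_poly_def
  by (elim exE, rename_tac a0 a1 a2 a3 a4 a5 b0 b1 b2 b3 b4 b5,
      rule_tac x="a0+b0" in exI, rule_tac x="a1+b1" in exI, rule_tac x="a2+b2" in exI,
      rule_tac x="a3+b3" in exI, rule_tac x="a4+b4" in exI, rule_tac x="a5+b5" in exI)
     (simp add: algebra_simps)

lemma quadratic_fun_cmult: "quadratic_fun f \<Longrightarrow> quadratic_fun (\<lambda>y. c * f y)"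
  unfolding quadratic_fun_def quad_poly_def
  by (elim exE, rename_tac a0 a1 a2 a3 a4 a5,
      rule_tac x="c*a0" in exI, rule_tac x="c*a1" in exI, rule_tac x="c*a2" in exI,
      rule_tac x="c*a3" in exI, rule_tac x="c*a4" in exI, rule_tac x="c*a5" in exI)
     (simp add: algebra_simps)

lemma quadratic_fun_rmult: "quadratic_fun f \<Longrightarrow> quadratic_fun (\<lambda>y. f y * c)"
  using quadratic_fun_cmult[of f c] by (simp add: mult.commute)

lemma quadratic_fun_diff: "quadratic_fun f \<Longrightarrow> quadratic_fun g \<Longrightarrow> quadratic_fun (\<lambda>y. f y - g y)"
  using quadratic_fun_add[of f "\<lambda>y. (-1) * g y"] quadratic_fun_cmult[of g "-1"] by simp

lemma quadratic_fun_div: "quadratic_fun f \<Longrightarrow> quadratic_fun (\<lambda>y. f y / c)"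
  using quadratic_fun_cmult[of f "1/c"] by simp

lemma quadratic_fun_sq: "linear_fun f \<Longrightarrow> quadratic_fun (\<lambda>y. (f y)^2)"
  using quadratic_fun_prod[of f f] by (simp add: power2_eq_square)

lemmas quadratic_fun_intros = quadratic_fun_add quadratic_fun_diff quadratic_fun_div quadratic_fun_cmult
  quadratic_fun_rmult quadratic_fun_sq quadratic_fun_prod
  linear_fun_inner linear_fun_nth linear_fun_add linear_fun_cmult linear_fun_rmult

lemma dY_quad_poly:
  "dY k (\<lambda>x y. quad_poly c0 c1 c2 c11 c12 c22 y) =
   (\<lambda>x y. quad_poly (c1 * axis k 1 $ 1 + c2 * axis k 1 $ 2)
              (2 * c11 * axis k 1 $ 1 + c12 * axis k 1 $ 2)
              (c12 * axis k 1 $ 1 + 2 * c22 * axis k 1 $ 2) 0 0 0 y)"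
  by (intro ext dY_eqI) (auto intro!: derivative_eq_intros simp: quad_poly_def algebra_simps)

lemma dY3_quad_poly: "dY i (dY j (dY k (\<lambda>x y. quad_poly c0 c1 c2 c11 c12 c22 y))) x y = 0"
  unfolding dY_quad_poly by (simp add: quad_poly_def)

lemma has_deriv3_0_quadratic_fun:
  assumes "quadratic_fun q"
  shows "has_deriv3_0 (\<lambda>t. q (y + t *\<^sub>R e)) 0"
proof -
  obtain c0 c1 c2 c11 c12 c22 where q: "\<And>y. q y = quad_poly c0 c1 c2 c11 c12 c22 y"
    using assms unfolding quadratic_fun_def by blast
  have "q (y + t *\<^sub>R e) = quad_poly c0 c1 c2 c11 c12 c22 y
      + (c1 * e$1 + c2 * e$2 + 2 * c11 * y$1 * e$1 + c12 * (y$1 * e$2 + e$1 * y$2) + 2 * c22 * y$2 * e$2) * t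
      + (c11 * e$1 * e$1 + c12 * e$1 * e$2 + c22 * e$2 * e$2) * t^2" for t
    unfolding q quad_poly_def by (simp add: algebra_simps power2_eq_square)
  then show ?thesis
    by (simp add: has_deriv3_0_quadratic_poly)
qed

section \<open>Metrics whose square is a product of powers of two linear forms\<close>

text \<open>log_pp g a t1 t2 x y is ln F^2 for F^2 = e^(g x) (t1 x \<bullet> y)^(2 a x) (t2 x \<bullet> y)^(2 (1 - a x)),
  and dlog_pp its derivative in y^l.\<close>

definition log_pp :: "(real^2\<Rightarrow>real) \<Rightarrow> (real^2\<Rightarrow>real) \<Rightarrow> (real^2\<Rightarrow>real^2) \<Rightarrow> (real^2\<Rightarrow>real^2) \<Rightarrow> tbfun" where
  "log_pp g a t1 t2 x y = g x + 2 * a x * ln (t1 x \<bullet> y) + 2 * (1 - a x) * ln (t2 x \<bullet> y)"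

definition dlog_pp :: "(real^2\<Rightarrow>real) \<Rightarrow> (real^2\<Rightarrow>real^2) \<Rightarrow> (real^2\<Rightarrow>real^2) \<Rightarrow> 2 \<Rightarrow> tbfun" where
  "dlog_pp a t1 t2 l x y = 2 * a x * (t1 x $ l) / (t1 x \<bullet> y) + 2 * (1 - a x) * (t2 x $ l) / (t2 x \<bullet> y)"

lemma has_deriv_exp_log_pp_y:
  assumes X: "t1 x \<bullet> y > 0" and Y: "t2 x \<bullet> y > 0"
  shows "((\<lambda>t. exp (log_pp g a t1 t2 x (y + t *\<^sub>R axis l 1))) has_real_derivative
          exp (log_pp g a t1 t2 x y) * dlog_pp a t1 t2 l x y) (at 0)"
  unfolding log_pp_def inner_add_axis dlog_pp_def
  using X Y
  by (auto intro!: derivative_eq_intros simp: field_simps)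

lemma has_deriv_exp_log_pp_dlog_y:
  assumes X: "t1 x \<bullet> y > 0" and Y: "t2 x \<bullet> y > 0"
  shows "((\<lambda>t. exp (log_pp g a t1 t2 x (y + t *\<^sub>R axis i 1)) * dlog_pp a t1 t2 j x (y + t *\<^sub>R axis i 1)) has_real_derivative
          exp (log_pp g a t1 t2 x y) * (dlog_pp a t1 t2 i x y * dlog_pp a t1 t2 j x y
            - 2 * a x * (t1 x $ i) * (t1 x $ j) / (t1 x \<bullet> y)^2
            - 2 * (1 - a x) * (t2 x $ i) * (t2 x $ j) / (t2 x \<bullet> y)^2)) (at 0)"
  unfolding log_pp_def inner_add_axis dlog_pp_def
  using X Y
  by (auto intro!: derivative_eq_intros simp: field_simps power2_eq_square)

lemma has_deriv_exp_log_pp_x: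
  assumes X: "t1 x \<bullet> y > 0" and Y: "t2 x \<bullet> y > 0"
    and dg: "((\<lambda>t. g (x + t *\<^sub>R e)) has_real_derivative g') (at 0)"
    and da: "((\<lambda>t. a (x + t *\<^sub>R e)) has_real_derivative a') (at 0)"
    and dt1: "((\<lambda>t. t1 (x + t *\<^sub>R e) \<bullet> y) has_real_derivative X') (at 0)"
    and dt2: "((\<lambda>t. t2 (x + t *\<^sub>R e) \<bullet> y) has_real_derivative Y') (at 0)"
  shows "((\<lambda>t. exp (log_pp g a t1 t2 (x + t *\<^sub>R e) y)) has_real_derivative
          exp (log_pp g a t1 t2 x y) * (g' + 2 * a' * (ln (t1 x \<bullet> y) - ln (t2 x \<bullet> y))
            + 2 * a x * X' / (t1 x \<bullet> y) + 2 * (1 - a x) * Y' / (t2 x \<bullet> y))) (at 0)"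
  unfolding log_pp_def
  using X Y
  by (auto intro!: derivative_eq_intros dg da dt1 dt2 simp: field_simps)

lemma has_deriv_exp_log_pp_dlog_x:
  assumes X: "t1 x \<bullet> y > 0" and Y: "t2 x \<bullet> y > 0"
    and dg: "((\<lambda>t. g (x + t *\<^sub>R e)) has_real_derivative g') (at 0)"
    and da: "((\<lambda>t. a (x + t *\<^sub>R e)) has_real_derivative a') (at 0)"
    and dt1: "((\<lambda>t. t1 (x + t *\<^sub>R e) \<bullet> y) has_real_derivative X') (at 0)"
    and dt2: "((\<lambda>t. t2 (x + t *\<^sub>R e) \<bullet> y) has_real_derivative Y') (at 0)"
    and dt1l: "((\<lambda>t. t1 (x + t *\<^sub>R e) $ l) has_real_derivative m') (at 0)"
    and dt2l: "((\<lambda>t. t2 (x + t *\<^sub>R e) $ l) has_real_derivative n') (at 0)"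
  shows "((\<lambda>t. exp (log_pp g a t1 t2 (x + t *\<^sub>R e) y) * dlog_pp a t1 t2 l (x + t *\<^sub>R e) y) has_real_derivative
          exp (log_pp g a t1 t2 x y) * ((g' + 2 * a' * (ln (t1 x \<bullet> y) - ln (t2 x \<bullet> y))
            + 2 * a x * X' / (t1 x \<bullet> y) + 2 * (1 - a x) * Y' / (t2 x \<bullet> y)) * dlog_pp a t1 t2 l x y
            + (2 * a' * (t1 x $ l) / (t1 x \<bullet> y) + 2 * a x * m' / (t1 x \<bullet> y)
               - 2 * a x * (t1 x $ l) * X' / (t1 x \<bullet> y)^2
               - 2 * a' * (t2 x $ l) / (t2 x \<bullet> y) + 2 * (1 - a x) * n' / (t2 x \<bullet> y)
               - 2 * (1 - a x) * (t2 x $ l) * Y' / (t2 x \<bullet> y)^2))) (at 0)"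
  unfolding log_pp_def dlog_pp_def
  using X Y
  by (auto intro!: derivative_eq_intros dg da dt1 dt2 dt1l dt2l simp: field_simps power2_eq_square)

locale power_product_chart =
  fixes F :: tbfun and g a :: "real^2 \<Rightarrow> real" and t1 t2 :: "real^2 \<Rightarrow> real^2"
    and N :: "((real^2) \<times> (real^2)) set" and x0 :: "real^2"
  assumes N_open: "open N"
    and forms_pos: "\<And>x y. (x,y) \<in> N \<Longrightarrow> t1 x \<bullet> y > 0 \<and> t2 x \<bullet> y > 0"
    and F_eq: "\<And>x y. (x,y) \<in> N \<Longrightarrow> F x y = exp (log_pp g a t1 t2 x y / 2)"
    and g_diff: "g differentiable (at x0)" and a_diff: "a differentiable (at x0)"
    and t1_diff: "\<And>m. (\<lambda>x. t1 x $ m) differentiable (at x0)"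
    and t2_diff: "\<And>m. (\<lambda>x. t2 x $ m) differentiable (at x0)"
    and finsler: "\<And>y v. (x0,y) \<in> N \<Longrightarrow> v \<noteq> 0 \<Longrightarrow> v \<bullet> ((\<chi> i j. fund F i j x0 y) *v v) > 0"
begin

abbreviation "Fsq \<equiv> (\<lambda>x y. exp (log_pp g a t1 t2 x y))"
abbreviation "dlog \<equiv> dlog_pp a t1 t2"
abbreviation "mu \<equiv> t1 x0"
abbreviation "nu \<equiv> t2 x0"
abbreviation "A \<equiv> a x0"

definition dg :: "2 \<Rightarrow> real" where
  "dg k = deriv (\<lambda>t. g (x0 + t *\<^sub>R axis k 1)) 0"
definition da :: "2 \<Rightarrow> real" where
  "da k = deriv (\<lambda>t. a (x0 + t *\<^sub>R axis k 1)) 0"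
definition dmu :: "2 \<Rightarrow> real^2" where
  "dmu k = (\<chi> m. deriv (\<lambda>t. t1 (x0 + t *\<^sub>R axis k 1) $ m) 0)"
definition dnu :: "2 \<Rightarrow> real^2" where
  "dnu k = (\<chi> m. deriv (\<lambda>t. t2 (x0 + t *\<^sub>R axis k 1) $ m) 0)"

lemma has_deriv_g: "((\<lambda>t. g (x0 + t *\<^sub>R axis k 1)) has_real_derivative dg k) (at 0)"
  unfolding dg_def using differentiable_along_line[OF g_diff] DERIV_deriv_iff_real_differentiable by blast

lemma has_deriv_a: "((\<lambda>t. a (x0 + t *\<^sub>R axis k 1)) has_real_derivative da k) (at 0)"
  unfolding da_def using differentiable_along_line[OF a_diff] DERIV_deriv_iff_real_differentiable by blast

lemma has_deriv_mu: "((\<lambda>t. t1 (x0 + t *\<^sub>R axis k 1) $ m) has_real_derivative dmu k $ m) (at 0)"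
  unfolding dmu_def using differentiable_along_line[OF t1_diff] DERIV_deriv_iff_real_differentiable by simp

lemma has_deriv_nu: "((\<lambda>t. t2 (x0 + t *\<^sub>R axis k 1) $ m) has_real_derivative dnu k $ m) (at 0)"
  unfolding dnu_def using differentiable_along_line[OF t2_diff] DERIV_deriv_iff_real_differentiable by simp

lemma has_deriv_mu_inner: "((\<lambda>t. t1 (x0 + t *\<^sub>R axis k 1) \<bullet> y) has_real_derivative dmu k \<bullet> y) (at 0)"
  unfolding inner_vec2 by (auto intro!: derivative_eq_intros has_deriv_mu)

lemma has_deriv_nu_inner: "((\<lambda>t. t2 (x0 + t *\<^sub>R axis k 1) \<bullet> y) has_real_derivative dnu k \<bullet> y) (at 0)"
  unfolding inner_vec2 by (auto intro!: derivative_eq_intros has_deriv_nu)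

lemma F_sq: "(x,y) \<in> N \<Longrightarrow> (F x y)^2 = Fsq x y"
  using F_eq[of x y] by (simp add: power2_eq_square exp_add[symmetric])

lemma dY_F:
  assumes xy: "(x,y) \<in> N"
  shows "dY l F x y = F x y * dlog l x y / 2"
proof -
  have "dY l F x y = dY l (\<lambda>x y. exp (log_pp g a t1 t2 x y / 2)) x y"
    by (rule dY_cong_open[OF N_open xy]) (simp add: F_eq)
  also have "\<dots> = exp (log_pp g a t1 t2 x y / 2) * dlog l x y / 2"
    by (rule dY_eqI) (use forms_pos[OF xy] in
        \<open>auto intro!: derivative_eq_intros simp: log_pp_def inner_add_axis dlog_pp_def field_simps\<close>)
  finally show ?thesis using F_eq[OF xy] by simp
qed

lemma dY_F_sq:
  assumes xy: "(x,y) \<in> N"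
  shows "dY l (\<lambda>x y. (F x y)^2) x y = Fsq x y * dlog l x y"
proof -
  have "dY l (\<lambda>x y. (F x y)^2) x y = dY l Fsq x y"
    by (rule dY_cong_open[OF N_open xy]) (simp add: F_sq)
  also have "\<dots> = Fsq x y * dlog l x y"
    by (rule dY_eqI, rule has_deriv_exp_log_pp_y) (use forms_pos[OF xy] in auto)
  finally show ?thesis .
qed

lemma dY_half_F_sq:
  assumes xy: "(x,y) \<in> N"
  shows "dY l (\<lambda>x y. (F x y)^2 / 2) x y = Fsq x y * dlog l x y / 2"
proof -
  have "dY l (\<lambda>x y. (F x y)^2 / 2) x y = dY l (\<lambda>x y. Fsq x y / 2) x y"
    by (rule dY_cong_open[OF N_open xy]) (simp add: F_sq)
  also have "\<dots> = Fsq x y * dlog l x y / 2"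
    by (rule dY_eqI, rule DERIV_cdivide, rule has_deriv_exp_log_pp_y) (use forms_pos[OF xy] in auto)
  finally show ?thesis .
qed

definition fund_pp :: "real^2 \<Rightarrow> real^2 \<Rightarrow> 2 \<Rightarrow> 2 \<Rightarrow> real" where
  "fund_pp x y i j = Fsq x y * (dlog i x y * dlog j x y
            - 2 * a x * (t1 x $ i) * (t1 x $ j) / (t1 x \<bullet> y)^2
            - 2 * (1 - a x) * (t2 x $ i) * (t2 x $ j) / (t2 x \<bullet> y)^2) / 2"

lemma fund_eq_fund_pp:
  assumes xy: "(x,y) \<in> N"
  shows "fund F i j x y = fund_pp x y i j"
proof -
  have "fund F i j x y = dY i (\<lambda>x y. Fsq x y * dlog j x y / 2) x y"
    unfolding fund_def by (rule dY_cong_open[OF N_open xy]) (simp add: dY_half_F_sq)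
  also have "\<dots> = fund_pp x y i j"
    unfolding fund_pp_def
    by (rule dY_eqI, rule DERIV_cdivide, rule has_deriv_exp_log_pp_dlog_y) (use forms_pos[OF xy] in auto)
  finally show ?thesis .
qed

lemma fund_pp_mult:
  assumes "(x0,y) \<in> N"
  shows "(\<Sum>h\<in>UNIV. fund_pp x0 y l h * s $ h) = Fsq x0 y * ((1/2)*((2*A*(mu$l)/(mu \<bullet> y)+2*(1-A)*(nu$l)/(nu \<bullet> y))
      *(2*A*(mu \<bullet> s)/(mu \<bullet> y) + 2*(1-A)*(nu \<bullet> s)/(nu \<bullet> y))
      - 2*A*(mu$l)*(mu \<bullet> s)/(mu \<bullet> y)^2 - 2*(1-A)*(nu$l)*(nu \<bullet> s)/(nu \<bullet> y)^2))"
proof -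
  have X: "mu \<bullet> y \<noteq> 0" and Y: "nu \<bullet> y \<noteq> 0" using forms_pos[OF assms] by auto
  show ?thesis unfolding fund_pp_def dlog_pp_def sum_2 inner_vec2[of mu s] inner_vec2[of nu s] using X Y
    by (simp add: field_simps power2_eq_square)
qed

lemma fund_quadratic_form:
  assumes xy: "(x0,y) \<in> N"
  shows "v \<bullet> ((\<chi> i j. fund F i j x0 y) *v v) = Fsq x0 y * ((1/2)*((2*A*(mu \<bullet> v)/(mu \<bullet> y) + 2*(1-A)*(nu \<bullet> v)/(nu \<bullet> y))^2
      - 2*A*(mu \<bullet> v)^2/(mu \<bullet> y)^2 - 2*(1-A)*(nu \<bullet> v)^2/(nu \<bullet> y)^2))"
proof -
  have c: "((\<chi> i j. fund F i j x0 y) *v v) $ l = Fsq x0 y * ((1/2)*((2*A*(mu$l)/(mu \<bullet> y)+2*(1-A)*(nu$l)/(nu \<bullet> y))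
      *(2*A*(mu \<bullet> v)/(mu \<bullet> y) + 2*(1-A)*(nu \<bullet> v)/(nu \<bullet> y))
      - 2*A*(mu$l)*(mu \<bullet> v)/(mu \<bullet> y)^2 - 2*(1-A)*(nu$l)*(nu \<bullet> v)/(nu \<bullet> y)^2))" for l
    unfolding fund_pp_mult[OF xy, symmetric] by (simp add: matrix_vector_mult_def fund_eq_fund_pp[OF xy])
  have X: "mu \<bullet> y \<noteq> 0" and Y: "nu \<bullet> y \<noteq> 0" using forms_pos[OF xy] by auto
  show ?thesis
    unfolding inner_vec2[of v] c unfolding inner_vec2[of mu v] inner_vec2[of nu v]
    using X Y by (simp add: field_simps power2_eq_square)
qed

definition det_mu_nu :: "real" where
  "det_mu_nu = mu$1 * nu$2 - mu$2 * nu$1"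

text \<open>The quadratic form of g_ij vanishes at perp \<mu> if \<mu>, \<nu> are dependent or a = 1, and at
  perp \<nu> if a = 0.\<close>
lemma nondegenerate:
  assumes xy: "(x0,y) \<in> N"
  shows "det_mu_nu \<noteq> 0 \<and> A \<noteq> 0 \<and> A \<noteq> 1"
proof -
  have "mu \<noteq> 0" "nu \<noteq> 0" using forms_pos[OF xy] by auto
  then have mu0: "perp mu \<noteq> 0" and nu0: "perp nu \<noteq> 0" by (simp_all add: perp_eq_0_iff)
  have mu: "mu \<bullet> perp mu = 0" and nu: "nu \<bullet> perp nu = 0" and nu_mu: "nu \<bullet> perp mu = - det_mu_nu"
    by (simp_all add: inner_perp det_mu_nu_def algebra_simps)
  show ?thesis
  proof (intro conjI notI)
    assume "det_mu_nu = 0"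
    then show False using finsler[OF xy mu0] fund_quadratic_form[OF xy, of "perp mu"] mu nu_mu by simp
  next
    assume "A = 0"
    then show False using finsler[OF xy nu0] fund_quadratic_form[OF xy, of "perp nu"] nu by simp
  next
    assume "A = 1"
    then show False using finsler[OF xy mu0] fund_quadratic_form[OF xy, of "perp mu"] mu by simp
  qed
qed

definition dx_log :: "real^2 \<Rightarrow> 2 \<Rightarrow> real" where
  "dx_log y k = dg k + 2 * da k * (ln (mu \<bullet> y) - ln (nu \<bullet> y))
            + 2 * A * (dmu k \<bullet> y) / (mu \<bullet> y) + 2 * (1 - A) * (dnu k \<bullet> y) / (nu \<bullet> y)"

definition dxdy_log :: "real^2 \<Rightarrow> 2 \<Rightarrow> 2 \<Rightarrow> real" where
  "dxdy_log y k l = 2 * da k * (mu $ l) / (mu \<bullet> y) + 2 * A * (dmu k $ l) / (mu \<bullet> y)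
               - 2 * A * (mu $ l) * (dmu k \<bullet> y) / (mu \<bullet> y)^2
               - 2 * da k * (nu $ l) / (nu \<bullet> y) + 2 * (1 - A) * (dnu k $ l) / (nu \<bullet> y)
               - 2 * (1 - A) * (nu $ l) * (dnu k \<bullet> y) / (nu \<bullet> y)^2"

lemma dX_F_sq:
  assumes xy: "(x0,y) \<in> N"
  shows "dX l (\<lambda>x y. (F x y)^2) x0 y = Fsq x0 y * dx_log y l"
proof -
  have "dX l (\<lambda>x y. (F x y)^2) x0 y = dX l Fsq x0 y"
    by (rule dX_cong_open[OF N_open xy]) (simp add: F_sq)
  also have "\<dots> = Fsq x0 y * dx_log y l"
    unfolding dx_log_def
    by (rule dX_eqI, rule has_deriv_exp_log_pp_x[OF _ _ has_deriv_g has_deriv_a has_deriv_mu_inner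
          has_deriv_nu_inner]) (use forms_pos[OF xy] in auto)
  finally show ?thesis .
qed

lemma dX_dY_F_sq:
  assumes xy: "(x0,y) \<in> N"
  shows "dX k (dY l (\<lambda>x y. (F x y)^2)) x0 y = Fsq x0 y * (dx_log y k * dlog l x0 y + dxdy_log y k l)"
proof -
  have "dX k (dY l (\<lambda>x y. (F x y)^2)) x0 y = dX k (\<lambda>x y. Fsq x y * dlog l x y) x0 y"
    by (rule dX_cong_open[OF N_open xy]) (simp add: dY_F_sq)
  also have "\<dots> = Fsq x0 y * (dx_log y k * dlog l x0 y + dxdy_log y k l)"
    unfolding dx_log_def dxdy_log_def
    by (rule dX_eqI, rule has_deriv_exp_log_pp_dlog_x[OF _ _ has_deriv_g has_deriv_a has_deriv_mu_inner
          has_deriv_nu_inner has_deriv_mu has_deriv_nu]) (use forms_pos[OF xy] in auto)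
  finally show ?thesis .
qed

end

text \<open>The equation solved by spray_pp (see spray_pp_solves), written with X = \<mu>\<bullet>y, Y = \<nu>\<bullet>y,
  b = 1 - a and L = log_ratio y; the other variables stand for the derivatives of g, a, \<mu>, \<nu>.\<close>
lemma spray_equation_alg:
  fixes X Y a b L al1 al2 G1 G2 a1 a2 t1 t2 w1 w2 C1 C2 :: real
  assumes X: "X \<noteq> 0" and Y: "Y \<noteq> 0" and a: "a \<noteq> 0" and b: "b \<noteq> 0" and ab: "a + b = 1"
  shows "(1/2)*((2*a*w1/X+2*b*w2/Y)*(2*a*((al1/2 + X^2*(G1/2+b*t2)/(2*a) + t1*X*Y/2 - X*(X*a1+Y*a2)/(2*a))
          + a1/(2*a)*(X^2*L))/X
      + 2*b*((al2/2 - t2*X*Y/2 - (a*t1-G2/2)*Y^2/(2*b) + Y*(X*a1+Y*a2)/(2*b)) + a2/(2*b)*(Y^2*L))/Y)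
      - 2*a*w1*((al1/2 + X^2*(G1/2+b*t2)/(2*a) + t1*X*Y/2 - X*(X*a1+Y*a2)/(2*a)) + a1/(2*a)*(X^2*L))/X^2
      - 2*b*w2*((al2/2 - t2*X*Y/2 - (a*t1-G2/2)*Y^2/(2*b) + Y*(X*a1+Y*a2)/(2*b)) + a2/(2*b)*(Y^2*L))/Y^2)
    = (1/4)*((X*G1+Y*G2 + 2*(X*a1+Y*a2)*L + 2*a*al1/X + 2*b*al2/Y)*(2*a*w1/X+2*b*w2/Y)
      + (2*(X*a1+Y*a2)*w1/X + 2*a*(C1 + (X*w2-Y*w1)*t1)/X - 2*a*w1*al1/X^2 - 2*(X*a1+Y*a2)*w2/Y
         + 2*b*(C2 + (X*w2-Y*w1)*t2)/Y - 2*b*w2*al2/Y^2)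
      - (w1*G1+w2*G2 + 2*(w1*a1+w2*a2)*L + 2*a*C1/X + 2*b*C2/Y))"
proof -
  have b_eq: "b = 1 - a" using ab by simp
  from X Y a b show ?thesis
    by (simp add: field_simps) (unfold b_eq, algebra)
qed

context power_product_chart begin

definition e1 :: "real^2" where
  "e1 = (\<chi> m. if m = 1 then nu$2/det_mu_nu else - nu$1/det_mu_nu)"
definition e2 :: "real^2" where
  "e2 = (\<chi> m. if m = 1 then - mu$2/det_mu_nu else mu$1/det_mu_nu)"

lemma dual_basis_inner:
  assumes "det_mu_nu \<noteq> 0"
  shows "mu \<bullet> e1 = 1" "nu \<bullet> e1 = 0" "mu \<bullet> e2 = 0" "nu \<bullet> e2 = 1"
  using assms by (simp_all add: e1_def e2_def inner_vec2 field_simps) (simp_all add: det_mu_nu_def)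

lemma dual_coords:
  assumes "det_mu_nu \<noteq> 0"
  shows "w $ i = (mu \<bullet> w) * e1 $ i + (nu \<bullet> w) * e2 $ i"
proof -
  have "det_mu_nu * w $ i = det_mu_nu * ((mu \<bullet> w) * e1 $ i + (nu \<bullet> w) * e2 $ i)"
    using exhaust_2[of i] assms
    by (auto simp: e1_def e2_def inner_vec2 field_simps) (simp_all add: det_mu_nu_def algebra_simps)
  then show ?thesis using assms by simp
qed

definition dg_along :: "real^2 \<Rightarrow> real" where
  "dg_along v = v$1 * dg 1 + v$2 * dg 2"
definition da_along :: "real^2 \<Rightarrow> real" where
  "da_along v = v$1 * da 1 + v$2 * da 2"
definition dmu_along :: "real^2 \<Rightarrow> real^2 \<Rightarrow> real" where
  "dmu_along u v = u$1 * (dmu 1 \<bullet> v) + u$2 * (dmu 2 \<bullet> v)"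
definition dnu_along :: "real^2 \<Rightarrow> real^2 \<Rightarrow> real" where
  "dnu_along u v = u$1 * (dnu 1 \<bullet> v) + u$2 * (dnu 2 \<bullet> v)"
definition dmu_skew :: "real" where
  "dmu_skew = dmu_along e1 e2 - dmu_along e2 e1"
definition dnu_skew :: "real" where
  "dnu_skew = dnu_along e1 e2 - dnu_along e2 e1"

lemma axis_simps:
  "dg_along (axis l 1) = dg l" "da_along (axis l 1) = da l"
  "dmu_along (axis l 1) y = dmu l \<bullet> y" "dnu_along (axis l 1) y = dnu l \<bullet> y"
  "(u::real^2) \<bullet> axis l 1 = u $ l"
  using exhaust_2[of l] by (auto simp: dg_along_def da_along_def dmu_along_def dnu_along_def axis_def inner_vec2)

lemma dg_along_dual: "det_mu_nu \<noteq> 0 \<Longrightarrow> dg_along w = (mu \<bullet> w) * dg_along e1 + (nu \<bullet> w) * dg_along e2"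
  unfolding dg_along_def by (subst (1 2) dual_coords[of w]) (simp_all add: algebra_simps)

lemma da_along_dual: "det_mu_nu \<noteq> 0 \<Longrightarrow> da_along w = (mu \<bullet> w) * da_along e1 + (nu \<bullet> w) * da_along e2"
  unfolding da_along_def by (subst (1 2) dual_coords[of w]) (simp_all add: algebra_simps)

lemma dmu_along_skew:
  assumes "det_mu_nu \<noteq> 0"
  shows "dmu_along u v - dmu_along v u = ((mu \<bullet> u) * (nu \<bullet> v) - (nu \<bullet> u) * (mu \<bullet> v)) * dmu_skew"
  unfolding dmu_skew_def dmu_along_def inner_vec2[of "dmu 1"] inner_vec2[of "dmu 2"]
    dual_coords[OF assms, of u] dual_coords[OF assms, of v]
  by algebra

lemma dnu_along_skew:
  assumes "det_mu_nu \<noteq> 0"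
  shows "dnu_along u v - dnu_along v u = ((mu \<bullet> u) * (nu \<bullet> v) - (nu \<bullet> u) * (mu \<bullet> v)) * dnu_skew"
  unfolding dnu_skew_def dnu_along_def inner_vec2[of "dnu 1"] inner_vec2[of "dnu 2"]
    dual_coords[OF assms, of u] dual_coords[OF assms, of v]
  by algebra

text \<open>The spray, obtained by solving g_ij G^j = (y^k \<partial>x^k \<partial>y^i F^2 - \<partial>x^i F^2) / 4
  for the components of G along e1 and e2.\<close>

definition log_ratio :: "real^2 \<Rightarrow> real" where
  "log_ratio y = ln (mu \<bullet> y) - ln (nu \<bullet> y)"

definition spray_e1_quad :: "real^2 \<Rightarrow> real" where
  "spray_e1_quad y = dmu_along y y/2 + (mu \<bullet> y)^2*(dg_along e1/2+(1-A)*dnu_skew)/(2*A)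
     + dmu_skew*(mu \<bullet> y)*(nu \<bullet> y)/2 - (mu \<bullet> y)*((mu \<bullet> y)*da_along e1+(nu \<bullet> y)*da_along e2)/(2*A)"

definition spray_e2_quad :: "real^2 \<Rightarrow> real" where
  "spray_e2_quad y = dnu_along y y/2 - dnu_skew*(mu \<bullet> y)*(nu \<bullet> y)/2
     - (A*dmu_skew-dg_along e2/2)*(nu \<bullet> y)^2/(2*(1-A))
     + (nu \<bullet> y)*((mu \<bullet> y)*da_along e1+(nu \<bullet> y)*da_along e2)/(2*(1-A))"

definition spray_e1 :: "real^2 \<Rightarrow> real" where
  "spray_e1 y = spray_e1_quad y + da_along e1/(2*A) * ((mu \<bullet> y)^2 * log_ratio y)"

definition spray_e2 :: "real^2 \<Rightarrow> real" where
  "spray_e2 y = spray_e2_quad y + da_along e2/(2*(1-A)) * ((nu \<bullet> y)^2 * log_ratio y)"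

definition spray_pp :: "real^2 \<Rightarrow> real^2" where
  "spray_pp y = spray_e1 y *\<^sub>R e1 + spray_e2 y *\<^sub>R e2"

lemma spray_quad_part_quadratic: "quadratic_fun (\<lambda>y. spray_e1_quad y * e1$h + spray_e2_quad y * e2$h)"
  unfolding spray_e1_quad_def spray_e2_quad_def dmu_along_def dnu_along_def
  by (intro quadratic_fun_intros)

lemma spray_rhs_expand:
  assumes "(x0,y) \<in> N"
  shows "y$1*(dx_log y 1*dlog l x0 y + dxdy_log y 1 l) + y$2*(dx_log y 2*dlog l x0 y + dxdy_log y 2 l) - dx_log y l =
   (dg_along y + 2*da_along y*log_ratio y + 2*A*dmu_along y y/(mu \<bullet> y) + 2*(1-A)*dnu_along y y/(nu \<bullet> y))
     *(2*A*mu$l/(mu \<bullet> y)+2*(1-A)*nu$l/(nu \<bullet> y))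
   + (2*da_along y*mu$l/(mu \<bullet> y) + 2*A*(dmu_along y (axis l 1))/(mu \<bullet> y) - 2*A*mu$l*dmu_along y y/(mu \<bullet> y)^2
      - 2*da_along y*nu$l/(nu \<bullet> y) + 2*(1-A)*(dnu_along y (axis l 1))/(nu \<bullet> y)
      - 2*(1-A)*nu$l*dnu_along y y/(nu \<bullet> y)^2)
   - (dg_along (axis l 1) + 2*da_along (axis l 1)*log_ratio y + 2*A*dmu_along (axis l 1) y/(mu \<bullet> y)
      + 2*(1-A)*dnu_along (axis l 1) y/(nu \<bullet> y))"
proof -
  have X: "mu \<bullet> y \<noteq> 0" and Y: "nu \<bullet> y \<noteq> 0" using forms_pos[OF assms] by auto
  show ?thesis
    unfolding axis_simps
    unfolding dx_log_def dxdy_log_def dlog_pp_def dg_along_def da_along_def dmu_along_def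
      dnu_along_def log_ratio_def axis_simps
    using X Y by (simp add: field_simps power2_eq_square)
qed

lemma spray_pp_solves:
  assumes nd: "det_mu_nu \<noteq> 0" "A \<noteq> 0" "A \<noteq> 1" and xy: "(x0,y) \<in> N"
  shows "(\<Sum>h\<in>UNIV. fund_pp x0 y l h * spray_pp y $ h)
    = (1/4) * ((\<Sum>k\<in>UNIV. y$k * dX k (dY l (\<lambda>x y. (F x y)^2)) x0 y) - dX l (\<lambda>x y. (F x y)^2) x0 y)"
proof -
  have X: "mu \<bullet> y \<noteq> 0" and Y: "nu \<bullet> y \<noteq> 0" using forms_pos[OF xy] by auto
  have rhs: "(\<Sum>k\<in>UNIV. y$k * dX k (dY l (\<lambda>x y. (F x y)^2)) x0 y) - dX l (\<lambda>x y. (F x y)^2) x0 y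
      = Fsq x0 y * (y$1*(dx_log y 1*dlog l x0 y + dxdy_log y 1 l)
          + y$2*(dx_log y 2*dlog l x0 y + dxdy_log y 2 l) - dx_log y l)"
    unfolding sum_2 dX_dY_F_sq[OF xy] dX_F_sq[OF xy] by (simp add: algebra_simps)
  have dual:
    "dg_along y = (mu \<bullet> y) * dg_along e1 + (nu \<bullet> y) * dg_along e2"
    "da_along y = (mu \<bullet> y) * da_along e1 + (nu \<bullet> y) * da_along e2"
    "dg_along (axis l 1) = mu$l * dg_along e1 + nu$l * dg_along e2"
    "da_along (axis l 1) = mu$l * da_along e1 + nu$l * da_along e2"
    using dg_along_dual[OF nd(1)] da_along_dual[OF nd(1)] axis_simps(5) by metis+
  have skew:
    "dmu_along y (axis l 1) = dmu_along (axis l 1) y + ((mu \<bullet> y) * nu$l - (nu \<bullet> y) * mu$l) * dmu_skew"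
    "dnu_along y (axis l 1) = dnu_along (axis l 1) y + ((mu \<bullet> y) * nu$l - (nu \<bullet> y) * mu$l) * dnu_skew"
    using dmu_along_skew[OF nd(1), of y "axis l 1"] dnu_along_skew[OF nd(1), of y "axis l 1"] axis_simps(5)
    by (simp_all add: algebra_simps)
  have "(1/2)*((2*A*mu$l/(mu \<bullet> y)+2*(1-A)*nu$l/(nu \<bullet> y))
        *(2*A * spray_e1 y/(mu \<bullet> y) + 2*(1-A)* spray_e2 y/(nu \<bullet> y))
      - 2*A*mu$l* spray_e1 y/(mu \<bullet> y)^2 - 2*(1-A)*nu$l* spray_e2 y/(nu \<bullet> y)^2)
    = (1/4)*(y$1*(dx_log y 1*dlog l x0 y + dxdy_log y 1 l)
        + y$2*(dx_log y 2*dlog l x0 y + dxdy_log y 2 l) - dx_log y l)"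
    unfolding spray_rhs_expand[OF xy] dual skew spray_e1_def spray_e2_def spray_e1_quad_def spray_e2_quad_def
    by (rule spray_equation_alg[where b="1 - A"]) (use X Y nd in auto)
  moreover have "mu \<bullet> spray_pp y = spray_e1 y" "nu \<bullet> spray_pp y = spray_e2 y"
    using dual_basis_inner[OF nd(1)] by (simp_all add: spray_pp_def inner_add_right)
  ultimately show ?thesis
    unfolding fund_pp_mult[OF xy] rhs by simp
qed

lemma spray_eq_spray_pp:
  assumes nd: "det_mu_nu \<noteq> 0" "A \<noteq> 0" "A \<noteq> 1" and xy: "(x0,y) \<in> N"
  shows "spray F h x0 y = spray_pp y $ h"
proof -
  define M where "M = (\<chi> i j. fund F i j x0 y)"
  define R where "R = (\<chi> l. (\<Sum>k\<in>UNIV. y$k * dX k (dY l (\<lambda>x y. (F x y)^2)) x0 y)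
      - dX l (\<lambda>x y. (F x y)^2) x0 y)"
  have inv: "matrix_inv M ** M = mat 1"
    by (rule matrix_inv_left_pos_def) (use finsler[OF xy] in \<open>simp add: M_def\<close>)
  have "(M *v spray_pp y) $ l = ((1/4) *\<^sub>R R) $ l" for l
  proof -
    have "(M *v spray_pp y) $ l = (\<Sum>h\<in>UNIV. fund_pp x0 y l h * spray_pp y $ h)"
      by (simp add: M_def matrix_vector_mult_def fund_eq_fund_pp[OF xy])
    also have "\<dots> = ((1/4) *\<^sub>R R) $ l"
      unfolding spray_pp_solves[OF nd xy] by (simp add: R_def)
    finally show ?thesis .
  qed
  then have "R = 4 *\<^sub>R (M *v spray_pp y)"
    by (simp add: vec_eq_iff mult.commute)
  then have "matrix_inv M *v R = 4 *\<^sub>R spray_pp y"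
    by (simp add: matrix_vector_mult_scaleR matrix_vector_mul_assoc inv)
  moreover have "spray F h x0 y = (1/4) * (matrix_inv M *v R) $ h"
    unfolding spray_def fund_inv_def M_def R_def matrix_vector_mult_def by simp
  ultimately show ?thesis by simp
qed

lemma has_deriv3_0_spray_pp:
  assumes xy: "(x0,y) \<in> N"
  shows "has_deriv3_0 (\<lambda>t. spray_pp (y + t *\<^sub>R axis i 1) $ h)
    (2 * (mu$i/(mu \<bullet> y) - nu$i/(nu \<bullet> y))^3 *
      (e1$h * da_along e1 * (mu \<bullet> y)^2 / (2*A) + e2$h * da_along e2 * (nu \<bullet> y)^2 / (2*(1-A))))"
proof -
  define X where "X = mu \<bullet> y"
  define Y where "Y = nu \<bullet> y"
  define m where "m = mu$i"
  define n where "n = nu$i"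
  have X: "X > 0" and Y: "Y > 0" using forms_pos[OF xy] by (auto simp: X_def Y_def)
  define q where "q = (\<lambda>z. spray_e1_quad z * e1$h + spray_e2_quad z * e2$h)"
  define k1 where "k1 = e1$h * (da_along e1/(2*A))"
  define k2 where "k2 = - (e2$h * (da_along e2/(2*(1-A))))"
  have D: "has_deriv3_0 (\<lambda>t. 1 * q (y + t *\<^sub>R axis i 1)
        + 1 * (k1 * ((X + t * m)^2 * (ln (X + t * m) - ln (Y + t * n)))
          + k2 * ((Y + t * n)^2 * (ln (Y + t * n) - ln (X + t * m)))))
      (1 * 0 + 1 * (k1 * (2 * X^2 * (m/X - n/Y)^3) + k2 * (2 * Y^2 * (n/Y - m/X)^3)))"
    by (intro has_deriv3_0_lincomb has_deriv3_0_quadratic_fun[OF spray_quad_part_quadratic[of h, folded q_def]]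
        has_deriv3_0_sq_log_ratio X Y)
  have "1 * q (y + t *\<^sub>R axis i 1) + 1 * (k1 * ((X + t * m)^2 * (ln (X + t * m) - ln (Y + t * n)))
                   + k2 * ((Y + t * n)^2 * (ln (Y + t * n) - ln (X + t * m))))
       = spray_pp (y + t *\<^sub>R axis i 1) $ h" for t
    unfolding spray_pp_def spray_e1_def spray_e2_def q_def k1_def k2_def log_ratio_def X_def Y_def m_def n_def
      inner_add_axis
    by (simp add: algebra_simps)
  then have "has_deriv3_0 (\<lambda>t. spray_pp (y + t *\<^sub>R axis i 1) $ h)
      (1 * 0 + 1 * (k1 * (2 * X^2 * (m/X - n/Y)^3) + k2 * (2 * Y^2 * (n/Y - m/X)^3)))"
    by (intro has_deriv3_0_cong[OF _ D] always_eventually allI)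
  also have "1 * 0 + 1 * (k1 * (2 * X^2 * (m/X - n/Y)^3) + k2 * (2 * Y^2 * (n/Y - m/X)^3))
      = 2 * (m/X - n/Y)^3 * (k1 * X^2 - k2 * Y^2)"
    using power_minus_odd[of 3 "m/X - n/Y"] by (simp add: algebra_simps)
  also have "\<dots> = 2 * (mu$i/(mu \<bullet> y) - nu$i/(nu \<bullet> y))^3 *
      (e1$h * da_along e1 * (mu \<bullet> y)^2 / (2*A) + e2$h * da_along e2 * (nu \<bullet> y)^2 / (2*(1-A)))"
    unfolding k1_def k2_def X_def Y_def m_def n_def by (simp add: algebra_simps)
  finally show ?thesis .
qed

lemma dY3_diag_spray:
  assumes nd: "det_mu_nu \<noteq> 0" "A \<noteq> 0" "A \<noteq> 1" and xy: "(x0,y) \<in> N"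
  shows "dY i (dY i (dY i (spray F h))) x0 y = 2 * (mu$i/(mu \<bullet> y) - nu$i/(nu \<bullet> y))^3 *
    (e1$h * da_along e1 * (mu \<bullet> y)^2 / (2*A) + e2$h * da_along e2 * (nu \<bullet> y)^2 / (2*(1-A)))"
proof -
  have "eventually (\<lambda>t. spray_pp (y + t *\<^sub>R axis i 1) $ h = spray F h x0 (y + t *\<^sub>R axis i 1)) (nhds 0)"
    using eventually_lines_in_open(1)[OF N_open xy, of "axis i 1"]
    by eventually_elim (simp add: spray_eq_spray_pp[OF nd])
  from has_deriv3_0_cong[OF this has_deriv3_0_spray_pp[OF xy]] show ?thesis
    unfolding dY3_diag by (rule has_deriv3_0_imp_deriv)
qed

lemma dlog_along:
  assumes "(x0,y) \<in> N"
  shows "v$1 * dlog 1 x0 y + v$2 * dlog 2 x0 y = 2*A*(mu \<bullet> v)/(mu \<bullet> y) + 2*(1-A)*(nu \<bullet> v)/(nu \<bullet> y)"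
  using forms_pos[OF assms] unfolding dlog_pp_def inner_vec2[of mu v] inner_vec2[of nu v]
  by (simp add: field_simps)

lemma landsberg_diag:
  assumes nd: "det_mu_nu \<noteq> 0" "A \<noteq> 0" "A \<noteq> 1" and xy: "(x0,y) \<in> N"
  shows "landsberg F i i i x0 y = -(1/2) * (F x0 y)^2 * (mu$i/(mu \<bullet> y) - nu$i/(nu \<bullet> y))^3 * da_along y"
proof -
  define r where "r = mu$i/(mu \<bullet> y) - nu$i/(nu \<bullet> y)"
  have X: "mu \<bullet> y \<noteq> 0" and Y: "nu \<bullet> y \<noteq> 0" using forms_pos[OF xy] by auto
  have "(\<Sum>h\<in>UNIV. berwald F h i i i x0 y * dY h F x0 y)
      = F x0 y * r^3 * (da_along e1 * (mu \<bullet> y)^2 / (2*A) * (e1$1 * dlog 1 x0 y + e1$2 * dlog 2 x0 y)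
                      + da_along e2 * (nu \<bullet> y)^2 / (2*(1-A)) * (e2$1 * dlog 1 x0 y + e2$2 * dlog 2 x0 y))"
    unfolding sum_2 berwald_def dY3_diag_spray[OF nd xy] dY_F[OF xy] r_def[symmetric]
    by (simp add: algebra_simps)
  also have "\<dots> = F x0 y * r^3 * ((mu \<bullet> y) * da_along e1 + (nu \<bullet> y) * da_along e2)"
    unfolding dlog_along[OF xy] dual_basis_inner[OF nd(1)]
    using X Y nd by (simp add: field_simps power2_eq_square)
  also have "\<dots> = F x0 y * r^3 * da_along y"
    using da_along_dual[OF nd(1), of y] by simp
  finally show ?thesis
    unfolding landsberg_def r_def by (simp add: power2_eq_square)
qed

lemma da_along_zero:
  assumes nd: "det_mu_nu \<noteq> 0" "A \<noteq> 0" "A \<noteq> 1" and xy: "(x0,y) \<in> N"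
    and lands: "\<And>i. landsberg F i i i x0 y = 0"
  shows "da_along y = 0"
proof (rule ccontr)
  assume "da_along y \<noteq> 0"
  moreover have "F x0 y \<noteq> 0" using F_eq[OF xy] by simp
  ultimately have "mu$i/(mu \<bullet> y) - nu$i/(nu \<bullet> y) = 0" for i
    using lands[of i] landsberg_diag[OF nd xy, of i] by simp
  moreover have X: "mu \<bullet> y > 0" and Y: "nu \<bullet> y > 0" using forms_pos[OF xy] by auto
  ultimately have m: "mu$i * (nu \<bullet> y) = nu$i * (mu \<bullet> y)" for i
    by (simp add: field_simps)
  have "det_mu_nu * (nu \<bullet> y) = nu$2 * (mu$1 * (nu \<bullet> y)) - nu$1 * (mu$2 * (nu \<bullet> y))"
    by (simp add: det_mu_nu_def algebra_simps)
  also have "\<dots> = 0"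
    unfolding m by (simp add: algebra_simps)
  finally have "det_mu_nu * (nu \<bullet> y) = 0" .
  then show False using nd(1) Y by simp
qed

lemma da_zero:
  assumes nd: "det_mu_nu \<noteq> 0" "A \<noteq> 0" "A \<noteq> 1" and xy: "(x0,y0) \<in> N"
    and lands: "\<And>y i. (x0,y) \<in> N \<Longrightarrow> landsberg F i i i x0 y = 0"
  shows "da k = 0"
proof -
  have "eventually (\<lambda>s. (x0, y0 + s *\<^sub>R axis k 1) \<in> N) (nhds 0)"
    by (rule eventually_lines_in_open(1)[OF N_open xy])
  then obtain d where d: "d > 0" "\<And>s. dist s 0 < d \<Longrightarrow> (x0, y0 + s *\<^sub>R axis k 1) \<in> N"
    unfolding eventually_nhds_metric by blast
  define s where "s = d/2"
  have "s \<noteq> 0" "(x0, y0 + s *\<^sub>R axis k 1) \<in> N" using d by (auto simp: s_def)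
  then have "da_along (y0 + s *\<^sub>R axis k 1) = 0" "da_along y0 = 0"
    using da_along_zero[OF nd _ lands] xy by blast+
  moreover have "da_along (y0 + s *\<^sub>R axis k 1) = da_along y0 + s * da_along (axis k 1)"
    by (simp add: da_along_def algebra_simps)
  ultimately show ?thesis using \<open>s \<noteq> 0\<close> axis_simps(2) by simp
qed

lemma berwald_zero:
  assumes xy: "(x0,y0) \<in> N"
    and lands: "\<And>y i. (x0,y) \<in> N \<Longrightarrow> landsberg F i i i x0 y = 0"
  shows "berwald F h i j k x0 y0 = 0"
proof -
  have nd: "det_mu_nu \<noteq> 0" "A \<noteq> 0" "A \<noteq> 1" using nondegenerate[OF xy] by auto
  have da0: "da_along v = 0" for v
    using da_zero[OF nd xy lands, of 1] da_zero[OF nd xy lands, of 2] by (simp add: da_along_def)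
  obtain c0 c1 c2 c11 c12 c22 where
    q: "\<And>y. spray_e1_quad y * e1$h + spray_e2_quad y * e2$h = quad_poly c0 c1 c2 c11 c12 c22 y"
    using spray_quad_part_quadratic[of h] unfolding quadratic_fun_def by blast
  define K where "K = (\<lambda>x::real^2. \<lambda>y. quad_poly c0 c1 c2 c11 c12 c22 y)"
  have "spray F h x0 y = K x0 y" if "(x0,y) \<in> N" for y
    unfolding spray_eq_spray_pp[OF nd that] spray_pp_def spray_e1_def spray_e2_def da0 K_def q[symmetric]
    by simp
  then have "dY k (spray F h) x0 y = dY k K x0 y" if "(x0,y) \<in> N" for y
    by (rule dY_cong_open[OF N_open that])
  then have "dY j (dY k (spray F h)) x0 y = dY j (dY k K) x0 y" if "(x0,y) \<in> N" for y
    by (rule dY_cong_open[OF N_open that])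
  then have "berwald F h i j k x0 y0 = dY i (dY j (dY k K)) x0 y0"
    unfolding berwald_def by (rule dY_cong_open[OF N_open xy])
  also have "\<dots> = 0" unfolding K_def by (rule dY3_quad_poly)
  finally show ?thesis .
qed

end

section \<open>Square root of a quadratic times an exponential of artanh\<close>

definition quad_artanh_ok :: "real \<Rightarrow> real \<Rightarrow> real \<Rightarrow> real \<Rightarrow> bool" where
  "quad_artanh_ok A B C u \<longleftrightarrow> A * u\<^sup>2 + B * u + C > 0 \<and> B\<^sup>2 - 4 * A * C > 0 \<and>
     \<bar>(2 * A * u + B) / sqrt (B\<^sup>2 - 4 * A * C)\<bar> < 1"

definition quad_artanh :: "real \<Rightarrow> real \<Rightarrow> real \<Rightarrow> real \<Rightarrow> real \<Rightarrow> real" where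
  "quad_artanh A B C K u =
     sqrt (A * u\<^sup>2 + B * u + C) * exp (K * artanh ((2 * A * u + B) / sqrt (B\<^sup>2 - 4 * A * C)))"

lemma quadratic_factor_artanh_arg:
  fixes A B C u :: real
  assumes "B\<^sup>2 - 4 * A * C > 0"
  defines "z \<equiv> (2 * A * u + B) / sqrt (B\<^sup>2 - 4 * A * C)"
  shows "-4 * A * (A * u\<^sup>2 + B * u + C) = (B\<^sup>2 - 4 * A * C) * ((1 + z) * (1 - z))"
proof -
  have "(B\<^sup>2 - 4 * A * C) * (z * z) = (2 * A * u + B)\<^sup>2"
    using assms by (simp add: z_def power2_eq_square)
  then show ?thesis
    by (simp add: algebra_simps power2_eq_square)
qed

lemma quad_artanh_ok_leading_neg:
  assumes "quad_artanh_ok A B C u"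
  shows "A < 0"
proof -
  define z where "z = (2 * A * u + B) / sqrt (B\<^sup>2 - 4 * A * C)"
  have D: "B\<^sup>2 - 4 * A * C > 0" and Q: "A * u\<^sup>2 + B * u + C > 0" and z: "\<bar>z\<bar> < 1"
    using assms by (auto simp: quad_artanh_ok_def z_def)
  have "-4 * A * (A * u\<^sup>2 + B * u + C) > 0"
    unfolding quadratic_factor_artanh_arg[OF D] z_def[symmetric] using D z by simp
  then show ?thesis using Q by (simp add: mult_less_0_iff)
qed

text \<open>With s = sqrt (B^2 - 4 A C) and z the argument of artanh,
  qa_form \<sigma> s A B \<bullet> y = \<sigma> y$1 (1 + z) and qa_form \<sigma> (-s) A B \<bullet> y = \<sigma> y$1 (1 - z)
  are the two linear factors of the quadratic.\<close>
definition qa_form :: "real \<Rightarrow> real \<Rightarrow> real \<Rightarrow> real \<Rightarrow> real^2" where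
  "qa_form \<sigma> s A B = \<sigma> *\<^sub>R (\<chi> m. if m = 1 then (s + B) / s else 2 * A / s)"

lemma quad_artanh_eq_power_product:
  assumes ok: "quad_artanh_ok A B C (y$2/y$1)" and \<sigma>: "\<sigma> * y$1 > 0" "\<bar>\<sigma>\<bar> = 1"
  defines "s \<equiv> sqrt (B\<^sup>2 - 4 * A * C)"
  defines "X \<equiv> qa_form \<sigma> s A B \<bullet> y" and "Y \<equiv> qa_form \<sigma> (- s) A B \<bullet> y"
  shows "X > 0" and "Y > 0" and "\<bar>y$1\<bar> * quad_artanh A B C K (y$2/y$1) =
     exp ((ln ((B\<^sup>2 - 4 * A * C) / (-4 * A)) + 2 * ((1 + K) / 2) * ln X + 2 * (1 - (1 + K) / 2) * ln Y) / 2)"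
proof -
  define z where "z = (2 * A * (y$2/y$1) + B) / s"
  define Q where "Q = A * (y$2/y$1)\<^sup>2 + B * (y$2/y$1) + C"
  have D: "B\<^sup>2 - 4 * A * C > 0" and Q: "Q > 0" and z: "\<bar>z\<bar> < 1"
    using ok by (auto simp: quad_artanh_ok_def z_def s_def Q_def)
  have An: "A < 0" using quad_artanh_ok_leading_neg[OF ok] .
  have s: "s > 0" using D by (simp add: s_def)
  have zp: "1 + z > 0" "1 - z > 0" using z by auto
  have y1: "y$1 \<noteq> 0" using \<sigma> by auto
  have hX: "X = (\<sigma> * y$1) * (1 + z)" and hY: "Y = (\<sigma> * y$1) * (1 - z)"
    unfolding X_def Y_def z_def qa_form_def using s y1 by (simp_all add: inner_vec2 field_simps)
  then show "X > 0" "Y > 0" using \<sigma> zp by simp_all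
  define c where "c = (B\<^sup>2 - 4 * A * C) / (-4 * A)"
  have "Q = c * ((1 + z) * (1 - z))"
    using quadratic_factor_artanh_arg[OF D, of "y$2/y$1"] An
    unfolding Q_def z_def s_def c_def by (simp add: field_simps)
  moreover have "c > 0"
    unfolding c_def using D An by (intro divide_pos_pos) auto
  ultimately have lnQ: "ln Q = ln c + ln (1 + z) + ln (1 - z)"
    using ln_mult_pos[OF \<open>c > 0\<close> mult_pos_pos[OF zp]] ln_mult_pos[OF zp] by simp
  have lX: "ln X = ln (\<sigma> * y$1) + ln (1 + z)" and lY: "ln Y = ln (\<sigma> * y$1) + ln (1 - z)"
    unfolding hX hY using ln_mult_pos \<sigma>(1) zp by auto
  have "\<bar>y$1\<bar> * quad_artanh A B C K (y$2/y$1)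
      = exp (ln (\<sigma> * y$1)) * exp (ln Q / 2) * exp (K * ((ln (1 + z) - ln (1 - z)) / 2))"
    unfolding quad_artanh_def s_def[symmetric] z_def[symmetric] Q_def[symmetric]
    using \<sigma> Q zp abs_mult[of \<sigma> "y$1"] abs_of_pos[OF \<sigma>(1)]
    by (auto simp: artanh_def ln_div ln_sqrt[symmetric])
  also have "\<dots> = exp ((ln c + 2 * ((1 + K) / 2) * ln X + 2 * (1 - (1 + K) / 2) * ln Y) / 2)"
    unfolding lnQ lX lY exp_add[symmetric] by (simp add: algebra_simps add_divide_distrib diff_divide_distrib)
  finally show "\<bar>y$1\<bar> * quad_artanh A B C K (y$2/y$1) =
     exp ((ln ((B\<^sup>2 - 4 * A * C) / (-4 * A)) + 2 * ((1 + K) / 2) * ln X + 2 * (1 - (1 + K) / 2) * ln Y) / 2)"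
    by (simp only: c_def)
qed

lemma qa_form_differentiable:
  assumes "s differentiable (at x)" "A differentiable (at x)" "B differentiable (at x)" "s x \<noteq> 0"
  shows "(\<lambda>x. qa_form \<sigma> (s x) (A x) (B x) $ m) differentiable (at x)"
  unfolding qa_form_def using assms by (cases "m = 1") (auto intro!: derivative_intros)

lemma quad_artanh_data_differentiable:
  assumes "A differentiable (at x)" "B differentiable (at x)" "C differentiable (at x)"
    and ok: "quad_artanh_ok (A x) (B x) (C x) u"
  shows "(\<lambda>x. ln (((B x)\<^sup>2 - 4 * A x * C x) / (-4 * A x))) differentiable (at x)"
    and "(\<lambda>x. qa_form \<sigma> (sqrt ((B x)\<^sup>2 - 4 * A x * C x)) (A x) (B x) $ m) differentiable (at x)"
    and "(\<lambda>x. qa_form \<sigma> (- sqrt ((B x)\<^sup>2 - 4 * A x * C x)) (A x) (B x) $ m) differentiable (at x)"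
proof -
  have D: "(B x)\<^sup>2 - 4 * A x * C x > 0" using ok by (simp add: quad_artanh_ok_def)
  have An: "A x < 0" using quad_artanh_ok_leading_neg[OF ok] .
  have dD: "(\<lambda>x. (B x)\<^sup>2 - 4 * A x * C x) differentiable (at x)"
    using assms by (auto intro!: derivative_intros)
  have ds: "(\<lambda>x. sqrt ((B x)\<^sup>2 - 4 * A x * C x)) differentiable (at x)"
    by (rule differentiable_sqrt_comp[OF dD D])
  show "(\<lambda>x. ln (((B x)\<^sup>2 - 4 * A x * C x) / (-4 * A x))) differentiable (at x)"
    using dD assms D An by (intro differentiable_ln_comp) (auto intro!: derivative_intros divide_pos_neg)
  show "(\<lambda>x. qa_form \<sigma> (sqrt ((B x)\<^sup>2 - 4 * A x * C x)) (A x) (B x) $ m) differentiable (at x)"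
    "(\<lambda>x. qa_form \<sigma> (- sqrt ((B x)\<^sup>2 - 4 * A x * C x)) (A x) (B x) $ m) differentiable (at x)"
    using ds assms D by (auto intro!: qa_form_differentiable derivative_intros)
qed

definition quad_artanh_metric :: "((real^2) \<times> (real^2)) set \<Rightarrow> tbfun \<Rightarrow> bool" where
  "quad_artanh_metric \<Omega> F \<longleftrightarrow> (\<exists>A B C K.
     (\<forall>(x, y) \<in> \<Omega>. A differentiable (at x) \<and> B differentiable (at x) \<and> C differentiable (at x)
        \<and> K differentiable (at x)) \<and>
     (\<forall>(x, y) \<in> \<Omega>. quad_artanh_ok (A x) (B x) (C x) (y$2/y$1) \<and>
        F x y = \<bar>y$1\<bar> * quad_artanh (A x) (B x) (C x) (K x) (y$2/y$1)))"

lemma quad_artanh_power_product_chart: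
  assumes \<Omega>_open: "open \<Omega>" and \<sigma>: "\<bar>\<sigma>\<bar> = 1"
    and diff: "A differentiable (at x0)" "B differentiable (at x0)" "C differentiable (at x0)"
      "K differentiable (at x0)"
    and ok0: "quad_artanh_ok (A x0) (B x0) (C x0) u"
    and form: "\<And>x y. (x, y) \<in> \<Omega> \<Longrightarrow> quad_artanh_ok (A x) (B x) (C x) (y$2/y$1) \<and>
        F x y = \<bar>y$1\<bar> * quad_artanh (A x) (B x) (C x) (K x) (y$2/y$1)"
    and finsler: "\<And>y v. (x0, y) \<in> \<Omega> \<Longrightarrow> v \<noteq> 0 \<Longrightarrow> v \<bullet> ((\<chi> i j. fund F i j x0 y) *v v) > 0"
  shows "power_product_chart F
    (\<lambda>x. ln (((B x)\<^sup>2 - 4 * A x * C x) / (-4 * A x))) (\<lambda>x. (1 + K x) / 2)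
    (\<lambda>x. qa_form \<sigma> (sqrt ((B x)\<^sup>2 - 4 * A x * C x)) (A x) (B x))
    (\<lambda>x. qa_form \<sigma> (- sqrt ((B x)\<^sup>2 - 4 * A x * C x)) (A x) (B x))
    (\<Omega> \<inter> {p. \<sigma> * snd p $ 1 > 0}) x0"
proof
  show "open (\<Omega> \<inter> {p. \<sigma> * snd p $ 1 > 0})"
    by (intro open_Int \<Omega>_open open_Collect_less) (auto intro!: continuous_intros)
  fix x y assume "(x, y) \<in> \<Omega> \<inter> {p. \<sigma> * snd p $ 1 > 0}"
  then have xy: "(x, y) \<in> \<Omega>" and "\<sigma> * y$1 > 0" by auto
  from quad_artanh_eq_power_product[OF conjunct1[OF form[OF xy]] this(2) \<sigma>] conjunct2[OF form[OF xy]]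
  show "qa_form \<sigma> (sqrt ((B x)\<^sup>2 - 4 * A x * C x)) (A x) (B x) \<bullet> y > 0 \<and>
      qa_form \<sigma> (- sqrt ((B x)\<^sup>2 - 4 * A x * C x)) (A x) (B x) \<bullet> y > 0"
    "F x y = exp (log_pp (\<lambda>x. ln (((B x)\<^sup>2 - 4 * A x * C x) / (-4 * A x))) (\<lambda>x. (1 + K x) / 2)
      (\<lambda>x. qa_form \<sigma> (sqrt ((B x)\<^sup>2 - 4 * A x * C x)) (A x) (B x))
      (\<lambda>x. qa_form \<sigma> (- sqrt ((B x)\<^sup>2 - 4 * A x * C x)) (A x) (B x)) x y / 2)"
    unfolding log_pp_def by simp_all
next
  show "(\<lambda>x. ln (((B x)\<^sup>2 - 4 * A x * C x) / (-4 * A x))) differentiable (at x0)"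
    "\<And>m. (\<lambda>x. qa_form \<sigma> (sqrt ((B x)\<^sup>2 - 4 * A x * C x)) (A x) (B x) $ m) differentiable (at x0)"
    "\<And>m. (\<lambda>x. qa_form \<sigma> (- sqrt ((B x)\<^sup>2 - 4 * A x * C x)) (A x) (B x) $ m) differentiable (at x0)"
    using quad_artanh_data_differentiable[OF diff(1-3) ok0] by blast+
  show "(\<lambda>x. (1 + K x) / 2) differentiable (at x0)"
    using diff(4) by (auto intro!: derivative_intros)
  show "\<And>y v. (x0, y) \<in> \<Omega> \<inter> {p. \<sigma> * snd p $ 1 > 0} \<Longrightarrow> v \<noteq> 0 \<Longrightarrow>
      v \<bullet> ((\<chi> i j. fund F i j x0 y) *v v) > 0"
    using finsler by blast
qed

theorem quad_artanh_landsberg_imp_berwald: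
  assumes \<Omega>_open: "open \<Omega>" and reg: "\<forall>(x, y) \<in> \<Omega>. y $ 1 \<noteq> 0"
    and qa: "quad_artanh_metric \<Omega> F"
    and finsler: "\<forall>(x, y) \<in> \<Omega>. \<forall>v::real^2. v \<noteq> 0 \<longrightarrow> v \<bullet> ((\<chi> i j. fund F i j x y) *v v) > 0"
    and landsbergian: "\<forall>(x, y) \<in> \<Omega>. \<forall>i. landsberg F i i i x y = 0"
  shows "\<forall>(x, y) \<in> \<Omega>. \<forall>h i j k. berwald F h i j k x y = 0"
proof (intro ballI allI, clarify)
  fix x0 y0 h i j k
  assume xy0: "(x0, y0) \<in> \<Omega>"
  obtain A B C K where diff: "A differentiable (at x0)" "B differentiable (at x0)"
      "C differentiable (at x0)" "K differentiable (at x0)"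
    and form: "\<And>x y. (x, y) \<in> \<Omega> \<Longrightarrow> quad_artanh_ok (A x) (B x) (C x) (y$2/y$1) \<and>
        F x y = \<bar>y$1\<bar> * quad_artanh (A x) (B x) (C x) (K x) (y$2/y$1)"
    using qa xy0 unfolding quad_artanh_metric_def by fast
  define \<sigma> :: real where "\<sigma> = sgn (y0$1)"
  have \<sigma>: "\<bar>\<sigma>\<bar> = 1" "\<sigma> * y0$1 > 0" using reg xy0 by (auto simp: \<sigma>_def sgn_if)
  have finsler0: "\<And>y v. (x0, y) \<in> \<Omega> \<Longrightarrow> v \<noteq> 0 \<Longrightarrow> v \<bullet> ((\<chi> i j. fund F i j x0 y) *v v) > 0"
    using finsler by blast
  note chart = quad_artanh_power_product_chart[OF \<Omega>_open \<sigma>(1) diff conjunct1[OF form[OF xy0]] form finsler0]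
  show "berwald F h i j k x0 y0 = 0"
    by (rule power_product_chart.berwald_zero[OF chart]) (use xy0 \<sigma> landsbergian in auto)
qed

lemma smooth2_on_differentiable: "smooth2_on U c \<Longrightarrow> open U \<Longrightarrow> x \<in> U \<Longrightarrow> c differentiable (at x)"
  unfolding smooth2_on_def by (metis iter_pd.simps(1) differentiable_on_eq_differentiable_at)

lemma form1_eq_quad_artanh:
  "form1_ok c1 c2 c3 u = quad_artanh_ok c3 (c2 * c3 - 4 * c1 + 1) c2 u"
  "form1 c1 c2 c3 u = quad_artanh c3 (c2 * c3 - 4 * c1 + 1) c2 ((- c2 * c3 + 4 * c1 + 1) / sqrt (D1 c1 c2 c3)) u"
proof -
  have D1: "D1 c1 c2 c3 = (c2 * c3 - 4 * c1 + 1)\<^sup>2 - 4 * c3 * c2"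
    unfolding D1_def by (simp add: algebra_simps power2_eq_square)
  show "form1_ok c1 c2 c3 u = quad_artanh_ok c3 (c2 * c3 - 4 * c1 + 1) c2 u"
    unfolding form1_ok_def quad_artanh_ok_def D1 by (simp add: algebra_simps)
  show "form1 c1 c2 c3 u = quad_artanh c3 (c2 * c3 - 4 * c1 + 1) c2 ((- c2 * c3 + 4 * c1 + 1) / sqrt (D1 c1 c2 c3)) u"
    unfolding form1_def quad_artanh_def D1 by (simp add: algebra_simps)
qed

lemma form2_eq_quad_artanh:
  "form2_ok a b u = quad_artanh_ok a b 1 u"
  "form2 a b u = quad_artanh a b 1 (- (b / sqrt (b\<^sup>2 - 4 * a))) u"
  unfolding form2_ok_def quad_artanh_ok_def form2_def quad_artanh_def by simp_all

lemma form1_quad_artanh_metric: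
  assumes U: "open U" "\<forall>(x, y) \<in> \<Omega>. x \<in> U"
    and "\<exists>c1 c2 c3. smooth2_on U c1 \<and> smooth2_on U c2 \<and> smooth2_on U c3 \<and>
          (\<forall>(x, y) \<in> \<Omega>. form1_ok (c1 x) (c2 x) (c3 x) (y $ 2 / y $ 1) \<and>
             F x y = \<bar>y $ 1\<bar> * form1 (c1 x) (c2 x) (c3 x) (y $ 2 / y $ 1))"
  shows "quad_artanh_metric \<Omega> F"
proof -
  obtain c1 c2 c3 where c: "smooth2_on U c1" "smooth2_on U c2" "smooth2_on U c3"
    and f: "\<forall>(x, y) \<in> \<Omega>. form1_ok (c1 x) (c2 x) (c3 x) (y $ 2 / y $ 1) \<and>
             F x y = \<bar>y $ 1\<bar> * form1 (c1 x) (c2 x) (c3 x) (y $ 2 / y $ 1)"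
    using assms(3) by blast
  define K where "K x = (- c2 x * c3 x + 4 * c1 x + 1) / sqrt (D1 (c1 x) (c2 x) (c3 x))" for x
  have "c3 differentiable (at x) \<and> (\<lambda>x. c2 x * c3 x - 4 * c1 x + 1) differentiable (at x) \<and>
      c2 differentiable (at x) \<and> K differentiable (at x)"
    if "(x, y) \<in> \<Omega>" for x y
  proof -
    have d: "c1 differentiable (at x)" "c2 differentiable (at x)" "c3 differentiable (at x)"
      using c U that smooth2_on_differentiable by blast+
    have "D1 (c1 x) (c2 x) (c3 x) > 0" using f that by (auto simp: form1_ok_def)
    moreover have "(\<lambda>x. sqrt (D1 (c1 x) (c2 x) (c3 x))) differentiable (at x)"
      using d calculation unfolding D1_def by (intro differentiable_sqrt_comp) (auto intro!: derivative_intros)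
    ultimately show ?thesis using d unfolding K_def by (auto intro!: derivative_intros)
  qed
  then show ?thesis
    unfolding quad_artanh_metric_def using f
    by (intro exI[of _ c3] exI[of _ "\<lambda>x. c2 x * c3 x - 4 * c1 x + 1"] exI[of _ c2] exI[of _ K])
       (auto simp: form1_eq_quad_artanh K_def)
qed

lemma form2_quad_artanh_metric:
  assumes U: "open U" "\<forall>(x, y) \<in> \<Omega>. x \<in> U"
    and "\<exists>a b. smooth2_on U a \<and> smooth2_on U b \<and>
          (\<forall>(x, y) \<in> \<Omega>. form2_ok (a x) (b x) (y $ 2 / y $ 1) \<and>
             F x y = \<bar>y $ 1\<bar> * form2 (a x) (b x) (y $ 2 / y $ 1))"
  shows "quad_artanh_metric \<Omega> F"
proof -
  obtain a b where c: "smooth2_on U a" "smooth2_on U b"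
    and f: "\<forall>(x, y) \<in> \<Omega>. form2_ok (a x) (b x) (y $ 2 / y $ 1) \<and>
             F x y = \<bar>y $ 1\<bar> * form2 (a x) (b x) (y $ 2 / y $ 1)"
    using assms(3) by blast
  define K where "K x = - (b x / sqrt ((b x)\<^sup>2 - 4 * a x))" for x
  have "a differentiable (at x) \<and> b differentiable (at x) \<and> (\<lambda>x. 1::real) differentiable (at x) \<and>
      K differentiable (at x)"
    if "(x, y) \<in> \<Omega>" for x y
  proof -
    have d: "a differentiable (at x)" "b differentiable (at x)"
      using c U that smooth2_on_differentiable by blast+
    have "(b x)\<^sup>2 - 4 * a x > 0" using f that by (auto simp: form2_ok_def)
    moreover have "(\<lambda>x. sqrt ((b x)\<^sup>2 - 4 * a x)) differentiable (at x)"
      using d calculation by (intro differentiable_sqrt_comp) (auto intro!: derivative_intros)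
    ultimately show ?thesis using d unfolding K_def by (auto intro!: derivative_intros)
  qed
  then show ?thesis
    unfolding quad_artanh_metric_def using f
    by (intro exI[of _ a] exI[of _ b] exI[of _ "\<lambda>x. 1"] exI[of _ K]) (auto simp: form2_eq_quad_artanh K_def)
qed

theorem corollary4p8:
  fixes F :: "real^2 \<Rightarrow> real^2 \<Rightarrow> real"
    and U :: "(real^2) set"
    and \<Omega> :: "((real^2) \<times> (real^2)) set"
  assumes U_open: "open U"
    and \<Omega>_open: "open \<Omega>"
    and \<Omega>_region: "\<forall>(x, y) \<in> \<Omega>. x \<in> U \<and> y $ 1 \<noteq> 0"
    and form:
      "(\<exists>c1 c2 c3. smooth2_on U c1 \<and> smooth2_on U c2 \<and> smooth2_on U c3 \<and>
          (\<forall>(x, y) \<in> \<Omega>. form1_ok (c1 x) (c2 x) (c3 x) (y $ 2 / y $ 1) \<and>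
             F x y = \<bar>y $ 1\<bar> * form1 (c1 x) (c2 x) (c3 x) (y $ 2 / y $ 1)))
       \<or> (\<exists>a b. smooth2_on U a \<and> smooth2_on U b \<and>
          (\<forall>(x, y) \<in> \<Omega>. form2_ok (a x) (b x) (y $ 2 / y $ 1) \<and>
             F x y = \<bar>y $ 1\<bar> * form2 (a x) (b x) (y $ 2 / y $ 1)))"
    and finsler:
      "\<forall>(x, y) \<in> \<Omega>. \<forall>v::real^2. v \<noteq> 0 \<longrightarrow>
          v \<bullet> ((\<chi> i j. fund F i j x y) *v v) > 0"
    and landsbergian: "\<forall>(x, y) \<in> \<Omega>. \<forall>i j k. landsberg F i j k x y = 0"
  shows "\<forall>(x, y) \<in> \<Omega>. \<forall>h i j k. berwald F h i j k x y = 0"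
proof -
  have reg: "\<forall>(x, y) \<in> \<Omega>. y $ 1 \<noteq> 0" and inU: "\<forall>(x, y) \<in> \<Omega>. x \<in> U"
    using \<Omega>_region by auto
  from form have "quad_artanh_metric \<Omega> F"
    using form1_quad_artanh_metric[OF U_open inU] form2_quad_artanh_metric[OF U_open inU] by blast
  moreover have "\<forall>(x, y) \<in> \<Omega>. \<forall>i. landsberg F i i i x y = 0"
    using landsbergian by blast
  ultimately show ?thesis
    using quad_artanh_landsberg_imp_berwald[OF \<Omega>_open reg _ finsler] by blast
qed

end
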